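(* Let $\tau$ be an arithmetic signature and let $k$ be a number. For each first-order $\tau_{k\text{-colors}}$-sentence $\phi$ in negation normal form in which no $C_i$ occurs inside the scope of a universal quantifier, there is a $\tau$-sentence $\phi'$ such that: (1) for all $\mathcal A \in \mathrm{STRUC}[\tau]$ we have $\mathcal A \models \phi'$ if and only if there is a $k$-coloring $\mathcal B$ of $\mathcal A$ with $\mathcal B \models \phi$; (2) $\mathrm{qr}(\phi') = \mathrm{qr}(\phi) + O(1)$; (3) $|\mathrm{bound}(\phi')| = |\mathrm{bound}(\phi)| + O(1)$, where $O(1)$ denotes a global constant independent of $\tau$ and $k$.
   Context: A signature $\tau$ is arithmetic if it contains $<$, ternary $\mathrm{add}$, ternary $\mathrm{mult}$, the unary function symbol $\mathrm{succ}$ and the constant $0$; $\mathrm{STRUC}[\tau]$ then contains only finite $\tau$-structures where $<$ is a linear order and $\mathrm{add},\mathrm{mult},\mathrm{succ},0$ have their natural meaning relative to this order (successor of the maximum is itself, $0$ is the minimum). For a number $k$, $\tau_{k\text{-colors}} = \tau \cup \{C_1,\dots,C_k\}$ with fresh unary relation symbols $C_i$. A $k$-coloring of a $\tau$-structure $\mathcal A$ is a $\tau_{k\text{-colors}}$-structure $\mathcal B$ whose $\tau$-restriction is $\mathcal A$ and in which $C_1^{\mathcal B},\dots,C_k^{\mathcal B}$ form a partition of the universe of $\mathcal A$ (color classes may be empty). A formula is in negation normal form if negations are applied only to atomic formulas. $\mathrm{qr}(\phi)$ is the quantifier rank and $\mathrm{bound}(\phi)$ the set of bound variables of $\phi$.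 *)

theory Defs
  imports Main
begin

text \<open>Function symbols (constants are
  0-ary function symbols): succ, 0, and arbitrary further ones.\<close>

datatype rsym = Less | Add | Mult | Col nat | RS nat
datatype fsym = Succ | Zero | FS nat

record sig =
  rsyms :: "rsym set"
  rarity :: "rsym \<Rightarrow> nat"
  fsyms :: "fsym set"
  farity :: "fsym \<Rightarrow> nat"

definition arith_sig :: "sig \<Rightarrow> bool" where
  "arith_sig \<tau> \<longleftrightarrow> finite (rsyms \<tau>) \<and> finite (fsyms \<tau>)
     \<and> Less \<in> rsyms \<tau> \<and> rarity \<tau> Less = 2
     \<and> Add \<in> rsyms \<tau> \<and> rarity \<tau> Add = 3
     \<and> Mult \<in> rsyms \<tau> \<and> rarity \<tau> Mult = 3
     \<and> Succ \<in> fsyms \<tau> \<and> farity \<tau> Succ = 1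
     \<and> Zero \<in> fsyms \<tau> \<and> farity \<tau> Zero = 0
     \<and> (\<forall>i. Col i \<notin> rsyms \<tau>)"

definition colors :: "sig \<Rightarrow> nat \<Rightarrow> sig" where
  "colors \<tau> k = \<tau>\<lparr> rsyms := rsyms \<tau> \<union> Col ` {1..k},
                  rarity := (\<lambda>r. case r of Col i \<Rightarrow> 1 | _ \<Rightarrow> rarity \<tau> r) \<rparr>"

datatype trm = Var nat | App fsym "trm list"

datatype fm = Eq trm trm | Rel rsym "trm list" | Neg fm | Conj fm fm | Disj fm fm
  | Ex nat fm | All nat fm

fun wf_trm :: "sig \<Rightarrow> trm \<Rightarrow> bool" where
  "wf_trm \<tau> (Var x) = True"
| "wf_trm \<tau> (App f ts) = (f \<in> fsyms \<tau> \<and> length ts = farity \<tau> f \<and> (\<forall>t\<in>set ts. wf_trm \<tau> t))"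

fun wf_fm :: "sig \<Rightarrow> fm \<Rightarrow> bool" where
  "wf_fm \<tau> (Eq s t) = (wf_trm \<tau> s \<and> wf_trm \<tau> t)"
| "wf_fm \<tau> (Rel r ts) = (r \<in> rsyms \<tau> \<and> length ts = rarity \<tau> r \<and> (\<forall>t\<in>set ts. wf_trm \<tau> t))"
| "wf_fm \<tau> (Neg \<phi>) = wf_fm \<tau> \<phi>"
| "wf_fm \<tau> (Conj \<phi> \<psi>) = (wf_fm \<tau> \<phi> \<and> wf_fm \<tau> \<psi>)"
| "wf_fm \<tau> (Disj \<phi> \<psi>) = (wf_fm \<tau> \<phi> \<and> wf_fm \<tau> \<psi>)"
| "wf_fm \<tau> (Ex x \<phi>) = wf_fm \<tau> \<phi>"
| "wf_fm \<tau> (All x \<phi>) = wf_fm \<tau> \<phi>"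

fun vars_trm :: "trm \<Rightarrow> nat set" where
  "vars_trm (Var x) = {x}"
| "vars_trm (App f ts) = (\<Union>t\<in>set ts. vars_trm t)"

fun free :: "fm \<Rightarrow> nat set" where
  "free (Eq s t) = vars_trm s \<union> vars_trm t"
| "free (Rel r ts) = (\<Union>t\<in>set ts. vars_trm t)"
| "free (Neg \<phi>) = free \<phi>"
| "free (Conj \<phi> \<psi>) = free \<phi> \<union> free \<psi>"
| "free (Disj \<phi> \<psi>) = free \<phi> \<union> free \<psi>"
| "free (Ex x \<phi>) = free \<phi> - {x}"
| "free (All x \<phi>) = free \<phi> - {x}"

definition sentence :: "fm \<Rightarrow> bool" where
  "sentence \<phi> \<longleftrightarrow> free \<phi> = {}"

fun is_atom :: "fm \<Rightarrow> bool" where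
  "is_atom (Eq s t) = True"
| "is_atom (Rel r ts) = True"
| "is_atom _ = False"

fun nnf :: "fm \<Rightarrow> bool" where
  "nnf (Eq s t) = True"
| "nnf (Rel r ts) = True"
| "nnf (Neg \<phi>) = is_atom \<phi>"
| "nnf (Conj \<phi> \<psi>) = (nnf \<phi> \<and> nnf \<psi>)"
| "nnf (Disj \<phi> \<psi>) = (nnf \<phi> \<and> nnf \<psi>)"
| "nnf (Ex x \<phi>) = nnf \<phi>"
| "nnf (All x \<phi>) = nnf \<phi>"

fun col_free :: "fm \<Rightarrow> bool" where
  "col_free (Eq s t) = True"
| "col_free (Rel r ts) = (\<forall>i. r \<noteq> Col i)"
| "col_free (Neg \<phi>) = col_free \<phi>"
| "col_free (Conj \<phi> \<psi>) = (col_free \<phi> \<and> col_free \<psi>)"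
| "col_free (Disj \<phi> \<psi>) = (col_free \<phi> \<and> col_free \<psi>)"
| "col_free (Ex x \<phi>) = col_free \<phi>"
| "col_free (All x \<phi>) = col_free \<phi>"

fun no_col_under_all :: "fm \<Rightarrow> bool" where
  "no_col_under_all (Eq s t) = True"
| "no_col_under_all (Rel r ts) = True"
| "no_col_under_all (Neg \<phi>) = no_col_under_all \<phi>"
| "no_col_under_all (Conj \<phi> \<psi>) = (no_col_under_all \<phi> \<and> no_col_under_all \<psi>)"
| "no_col_under_all (Disj \<phi> \<psi>) = (no_col_under_all \<phi> \<and> no_col_under_all \<psi>)"
| "no_col_under_all (Ex x \<phi>) = no_col_under_all \<phi>"
| "no_col_under_all (All x \<phi>) = col_free \<phi>"

fun qr :: "fm \<Rightarrow> nat" where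
  "qr (Eq s t) = 0"
| "qr (Rel r ts) = 0"
| "qr (Neg \<phi>) = qr \<phi>"
| "qr (Conj \<phi> \<psi>) = max (qr \<phi>) (qr \<psi>)"
| "qr (Disj \<phi> \<psi>) = max (qr \<phi>) (qr \<psi>)"
| "qr (Ex x \<phi>) = Suc (qr \<phi>)"
| "qr (All x \<phi>) = Suc (qr \<phi>)"

fun bound :: "fm \<Rightarrow> nat set" where
  "bound (Eq s t) = {}"
| "bound (Rel r ts) = {}"
| "bound (Neg \<phi>) = bound \<phi>"
| "bound (Conj \<phi> \<psi>) = bound \<phi> \<union> bound \<psi>"
| "bound (Disj \<phi> \<psi>) = bound \<phi> \<union> bound \<psi>"
| "bound (Ex x \<phi>) = insert x (bound \<phi>)"
| "bound (All x \<phi>) = insert x (bound \<phi>)"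

text \<open>Finite structures; universes are (w.l.o.g.) finite sets of naturals.\<close>
record struc =
  univ :: "nat set"
  rint :: "rsym \<Rightarrow> nat list \<Rightarrow> bool"
  fint :: "fsym \<Rightarrow> nat list \<Rightarrow> nat"

definition is_struc :: "sig \<Rightarrow> struc \<Rightarrow> bool" where
  "is_struc \<tau> A \<longleftrightarrow> finite (univ A) \<and> univ A \<noteq> {}
     \<and> (\<forall>f\<in>fsyms \<tau>. \<forall>as. length as = farity \<tau> f \<and> set as \<subseteq> univ A
            \<longrightarrow> fint A f as \<in> univ A)"

fun eval :: "struc \<Rightarrow> (nat \<Rightarrow> nat) \<Rightarrow> trm \<Rightarrow> nat" where
  "eval A s (Var x) = s x"
| "eval A s (App f ts) = fint A f (map (eval A s) ts)"

fun sat :: "struc \<Rightarrow> (nat \<Rightarrow> nat) \<Rightarrow> fm \<Rightarrow> bool" where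
  "sat A s (Eq t u) = (eval A s t = eval A s u)"
| "sat A s (Rel r ts) = rint A r (map (eval A s) ts)"
| "sat A s (Neg \<phi>) = (\<not> sat A s \<phi>)"
| "sat A s (Conj \<phi> \<psi>) = (sat A s \<phi> \<and> sat A s \<psi>)"
| "sat A s (Disj \<phi> \<psi>) = (sat A s \<phi> \<or> sat A s \<psi>)"
| "sat A s (Ex x \<phi>) = (\<exists>a\<in>univ A. sat A (s(x := a)) \<phi>)"
| "sat A s (All x \<phi>) = (\<forall>a\<in>univ A. sat A (s(x := a)) \<phi>)"

definition models :: "struc \<Rightarrow> fm \<Rightarrow> bool" where
  "models A \<phi> \<longleftrightarrow> (\<forall>s. (\<forall>x. s x \<in> univ A) \<longrightarrow> sat A s \<phi>)"

definition pos :: "struc \<Rightarrow> nat \<Rightarrow> nat" where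
  "pos A a = card {b \<in> univ A. rint A Less [b, a]}"

definition arith_struc :: "sig \<Rightarrow> struc \<Rightarrow> bool" where
  "arith_struc \<tau> A \<longleftrightarrow> is_struc \<tau> A
   \<and> (\<forall>a\<in>univ A. \<not> rint A Less [a, a])
   \<and> (\<forall>a\<in>univ A. \<forall>b\<in>univ A. \<forall>c\<in>univ A.
          rint A Less [a, b] \<and> rint A Less [b, c] \<longrightarrow> rint A Less [a, c])
   \<and> (\<forall>a\<in>univ A. \<forall>b\<in>univ A. a = b \<or> rint A Less [a, b] \<or> rint A Less [b, a])
   \<and> (\<forall>a\<in>univ A. \<forall>b\<in>univ A. \<forall>c\<in>univ A.
          rint A Add [a, b, c] \<longleftrightarrow> pos A a + pos A b = pos A c)
   \<and> (\<forall>a\<in>univ A. \<forall>b\<in>univ A. \<forall>c\<in>univ A.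
          rint A Mult [a, b, c] \<longleftrightarrow> pos A a * pos A b = pos A c)
   \<and> (\<forall>a\<in>univ A. (pos A a + 1 < card (univ A) \<longrightarrow> pos A (fint A Succ [a]) = pos A a + 1)
                 \<and> (pos A a + 1 = card (univ A) \<longrightarrow> fint A Succ [a] = a))
   \<and> pos A (fint A Zero []) = 0"

definition coloring :: "sig \<Rightarrow> nat \<Rightarrow> struc \<Rightarrow> struc \<Rightarrow> bool" where
  "coloring \<tau> k A B \<longleftrightarrow> is_struc (colors \<tau> k) B \<and> univ B = univ A
   \<and> (\<forall>r\<in>rsyms \<tau>. \<forall>as. length as = rarity \<tau> r \<and> set as \<subseteq> univ A
         \<longrightarrow> rint B r as = rint A r as)
   \<and> (\<forall>f\<in>fsyms \<tau>. \<forall>as. length as = farity \<tau> f \<and> set as \<subseteq> univ A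
         \<longrightarrow> fint B f as = fint A f as)
   \<and> (\<forall>a\<in>univ A. \<exists>!i. i \<in> {1..k} \<and> rint B (Col i) [a])"

end

theory Submission
  imports Defs "HOL-Number_Theory.Cong"
begin

text \<open>
  Color atoms occur only outside universal quantifiers, so a coloring satisfying \<phi> matters
  only on the at most color_atoms \<phi> elements that the color atoms see along one choice of
  existential witnesses (colored_support): any coloring agreeing there satisfies \<phi> as well.
  Hence a coloring can be guessed by a finite disjunction over color lists g (no quantifiers)
  plus a description of which element gets which entry of g. On structures below a threshold
  depending only on m = color_atoms \<phi> + 1 the elements are named by numerals. On larger ones the
  arithmetic encodes the map from the support S to indices 1..m as x \<mapsto> R mod ((x mod q + 1) L + 1):
  q is chosen injective on S modulo q, L makes the moduli pairwise coprime, and the Chinese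
  remainder theorem gives R; all three stay below n once n is large. Guessing q, L, R and decoding
  costs a constant number of quantifiers, independent of \<tau>, k and \<phi>.
\<close>

lemma eval_upd: "x \<notin> vars_trm t \<Longrightarrow> eval A (s(x:=a)) t = eval A s t"
  by (induction t) (auto cong: map_cong)

lemma eval_cong: "(\<forall>x\<in>vars_trm t. s x = s' x) \<Longrightarrow> eval A s t = eval A s' t"
  by (induction t) (auto cong: map_cong)

lemma sat_cong: "(\<forall>x\<in>free \<phi>. s x = s' x) \<Longrightarrow> sat A s \<phi> = sat A s' \<phi>"
proof (induction \<phi> arbitrary: s s')
  case (Eq t u)
  then show ?case using eval_cong[of t s s' A] eval_cong[of u s s' A] by auto
next
  case (Rel r ts)
  have "map (eval A s) ts = map (eval A s') ts"
    using Rel by (auto intro!: eval_cong)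
  then show ?case by (metis sat.simps(2))
next
  case (Neg \<phi>)
  then show ?case by simp
next
  case (Conj \<phi>1 \<phi>2)
  have "sat A s \<phi>1 = sat A s' \<phi>1" using Conj.IH(1)[of s s'] Conj.prems by simp
  moreover have "sat A s \<phi>2 = sat A s' \<phi>2" using Conj.IH(2)[of s s'] Conj.prems by simp
  ultimately show ?case by simp
next
  case (Disj \<phi>1 \<phi>2)
  have "sat A s \<phi>1 = sat A s' \<phi>1" using Disj.IH(1)[of s s'] Disj.prems by simp
  moreover have "sat A s \<phi>2 = sat A s' \<phi>2" using Disj.IH(2)[of s s'] Disj.prems by simp
  ultimately show ?case by simp
next
  case (Ex x \<phi>)
  have "\<And>a. \<forall>y\<in>free \<phi>. (s(x:=a)) y = (s'(x:=a)) y" using Ex.prems by auto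
  then have "\<And>a. sat A (s(x:=a)) \<phi> = sat A (s'(x:=a)) \<phi>" using Ex.IH by blast
  then show ?case by simp
next
  case (All x \<phi>)
  have "\<And>a. \<forall>y\<in>free \<phi>. (s(x:=a)) y = (s'(x:=a)) y" using All.prems by auto
  then have "\<And>a. sat A (s(x:=a)) \<phi> = sat A (s'(x:=a)) \<phi>" using All.IH by blast
  then show ?case by simp
qed

lemma models_iff_sat:
  assumes "sentence \<phi>" and "\<forall>x. s x \<in> univ A"
  shows "models A \<phi> \<longleftrightarrow> sat A s \<phi>"
proof -
  have "sat A s' \<phi> = sat A s \<phi>" for s'
    by (rule sat_cong) (use assms(1) in \<open>simp add: sentence_def\<close>)
  with assms(2) show ?thesis unfolding models_def by blast
qed

lemma eval_in_univ:
  assumes "is_struc \<tau> A" and "wf_trm \<tau> t" and "\<forall>x. s x \<in> univ A"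
  shows "eval A s t \<in> univ A"
  using assms(2)
proof (induction t)
  case (App f ts)
  then have "set (map (eval A s) ts) \<subseteq> univ A" by auto
  with App.prems assms(1) show ?case unfolding is_struc_def by auto
qed (use assms(3) in simp)

lemma colors_simps [simp]:
  "fsyms (colors \<tau> k) = fsyms \<tau>" "farity (colors \<tau> k) = farity \<tau>"
  "rsyms (colors \<tau> k) = rsyms \<tau> \<union> Col ` {1..k}"
  "rarity (colors \<tau> k) (Col i) = 1"
  "(\<And>i. r \<noteq> Col i) \<Longrightarrow> rarity (colors \<tau> k) r = rarity \<tau> r"
  unfolding colors_def by (auto split: rsym.split)

lemma wf_trm_colors [simp]: "wf_trm (colors \<tau> k) t = wf_trm \<tau> t"
  by (induction t) auto

lemma wf_fm_colors_Col:
  assumes "wf_fm (colors \<tau> k) (Rel (Col i) ts)"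
  obtains t where "ts = [t]" and "wf_trm \<tau> t"
proof -
  from assms have "length ts = 1" by simp
  then obtain t where "ts = [t]" by (metis One_nat_def length_0_conv length_Suc_conv)
  with assms that show thesis by auto
qed

definition colored :: "struc \<Rightarrow> (nat \<Rightarrow> nat) \<Rightarrow> struc" where
  "colored A col = A\<lparr>rint := (\<lambda>r as. case r of Col i \<Rightarrow> col (hd as) = i | _ \<Rightarrow> rint A r as)\<rparr>"

lemma colored_simps [simp]:
  "univ (colored A col) = univ A"
  "fint (colored A col) = fint A"
  "rint (colored A col) (Col i) as \<longleftrightarrow> col (hd as) = i"
  "(\<And>i. r \<noteq> Col i) \<Longrightarrow> rint (colored A col) r as = rint A r as"
  unfolding colored_def by (auto split: rsym.split)

lemma eval_colored [simp]: "eval (colored A col) = eval A"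
proof (intro ext)
  show "eval (colored A col) s t = eval A s t" for s t
    by (induction t) (simp_all cong: map_cong)
qed

lemma sat_colored_col_free: "col_free \<phi> \<Longrightarrow> sat (colored A col) s \<phi> = sat A s \<phi>"
  by (induction \<phi> arbitrary: s) auto

lemma coloring_colored:
  assumes "\<forall>i. Col i \<notin> rsyms \<tau>" and "is_struc \<tau> A" and "col ` univ A \<subseteq> {1..k}"
  shows "coloring \<tau> k A (colored A col)"
proof -
  have "is_struc (colors \<tau> k) (colored A col)" using assms(2) by (simp add: is_struc_def)
  moreover have "rint (colored A col) r as = rint A r as" if "r \<in> rsyms \<tau>" for r as
    using that assms(1) by (metis colored_simps(4))
  moreover have "\<exists>!i. i \<in> {1..k} \<and> rint (colored A col) (Col i) [a]" if "a \<in> univ A" for a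
    using that assms(3) by (intro ex1I[of _ "col a"]) auto
  ultimately show ?thesis unfolding coloring_def by simp
qed

definition color_of :: "nat \<Rightarrow> struc \<Rightarrow> nat \<Rightarrow> nat" where
  "color_of k B a = (THE i. i \<in> {1..k} \<and> rint B (Col i) [a])"

lemma color_of_iff:
  assumes "coloring \<tau> k A B" and "a \<in> univ A"
  shows "color_of k B a \<in> {1..k}" and "i \<in> {1..k} \<Longrightarrow> rint B (Col i) [a] \<longleftrightarrow> color_of k B a = i"
proof -
  have unique: "\<exists>!i. i \<in> {1..k} \<and> rint B (Col i) [a]" using assms unfolding coloring_def by blast
  then have c: "color_of k B a \<in> {1..k} \<and> rint B (Col (color_of k B a)) [a]"
    unfolding color_of_def by (rule theI')
  then show "color_of k B a \<in> {1..k}" by blast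
  assume i: "i \<in> {1..k}"
  show "rint B (Col i) [a] \<longleftrightarrow> color_of k B a = i"
  proof
    assume "rint B (Col i) [a]"
    with i show "color_of k B a = i" unfolding color_of_def by (intro the1_equality[OF unique]) simp
  qed (use c in blast)
qed

lemma coloring_agrees:
  assumes "coloring \<tau> k A B"
  shows "univ B = univ A"
    and "r \<in> rsyms \<tau> \<Longrightarrow> length as = rarity \<tau> r \<Longrightarrow> set as \<subseteq> univ A \<Longrightarrow> rint B r as = rint A r as"
    and "f \<in> fsyms \<tau> \<Longrightarrow> length as = farity \<tau> f \<Longrightarrow> set as \<subseteq> univ A \<Longrightarrow> fint B f as = fint A f as"
  using assms unfolding coloring_def by blast+

lemma eval_coloring:
  assumes "coloring \<tau> k A B" and "is_struc \<tau> A" and "wf_trm \<tau> t" and "\<forall>x. s x \<in> univ A"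
  shows "eval B s t = eval A s t"
  using assms(3)
proof (induction t)
  case (App f ts)
  have in_univ: "set (map (eval A s) ts) \<subseteq> univ A"
    using App.prems eval_in_univ[OF assms(2) _ assms(4)] by auto
  have "map (eval B s) ts = map (eval A s) ts" using App by (fastforce simp: map_eq_conv)
  moreover have "fint B f (map (eval A s) ts) = fint A f (map (eval A s) ts)"
    by (rule coloring_agrees(3)[OF assms(1)]) (use App.prems in_univ in simp_all)
  ultimately show ?case by (simp del: map_eq_conv)
qed simp

lemma sat_coloring_iff_colored_Rel:
  assumes B: "coloring \<tau> k A B" and A: "is_struc \<tau> A" and no_col: "\<forall>i. Col i \<notin> rsyms \<tau>"
    and wf: "wf_fm (colors \<tau> k) (Rel r ts)" and s: "\<forall>x. s x \<in> univ A"
  shows "sat B s (Rel r ts) \<longleftrightarrow> sat (colored A (color_of k B)) s (Rel r ts)"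
proof (cases "\<exists>i. r = Col i")
  case True
  then obtain i where r: "r = Col i" by blast
  from wf[unfolded r] obtain t where ts: "ts = [t]" and t: "wf_trm \<tau> t" by (rule wf_fm_colors_Col)
  from wf no_col have i: "i \<in> {1..k}" by (auto simp: r)
  have "eval B s t = eval A s t" and "eval A s t \<in> univ A"
    using eval_coloring[OF B A t s] eval_in_univ[OF A t s] by simp_all
  then show ?thesis using color_of_iff(2)[OF B _ i] r ts by simp
next
  case False
  with wf have r: "r \<in> rsyms \<tau>" "length ts = rarity \<tau> r" and ts: "\<forall>t\<in>set ts. wf_trm \<tau> t"
    by auto
  have in_univ: "set (map (eval A s) ts) \<subseteq> univ A"
    using ts eval_in_univ[OF A _ s] by auto
  have "map (eval B s) ts = map (eval A s) ts"
    using ts eval_coloring[OF B A _ s] by simp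
  moreover have "rint B r (map (eval A s) ts) = rint A r (map (eval A s) ts)"
    by (rule coloring_agrees(2)[OF B r(1)]) (use r(2) in_univ in auto)
  ultimately show ?thesis using False by (simp del: map_eq_conv)
qed

lemma sat_coloring_iff_colored:
  assumes B: "coloring \<tau> k A B" and A: "is_struc \<tau> A" and no_col: "\<forall>i. Col i \<notin> rsyms \<tau>"
    and "wf_fm (colors \<tau> k) \<phi>" and "\<forall>x. s x \<in> univ A"
  shows "sat B s \<phi> \<longleftrightarrow> sat (colored A (color_of k B)) s \<phi>"
  using assms(4,5)
proof (induction \<phi> arbitrary: s)
  case (Rel r ts)
  then show ?case by (rule sat_coloring_iff_colored_Rel[OF B A no_col])
next
  case (Eq t u)
  then show ?case using eval_coloring[OF B A] by simp
next
  case (Ex x \<phi>)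
  then have "sat B (s(x := a)) \<phi> = sat (colored A (color_of k B)) (s(x := a)) \<phi>" if "a \<in> univ A" for a
    using that by simp
  then show ?case unfolding sat.simps coloring_agrees(1)[OF B] colored_simps(1)
    by (rule bex_cong[OF refl])
next
  case (All x \<phi>)
  then have "sat B (s(x := a)) \<phi> = sat (colored A (color_of k B)) (s(x := a)) \<phi>" if "a \<in> univ A" for a
    using that by simp
  then show ?case unfolding sat.simps coloring_agrees(1)[OF B] colored_simps(1)
    by (rule ball_cong[OF refl])
next
  case (Disj \<phi> \<psi>)
  then show ?case using Disj.IH[OF _ Disj.prems(2)] by simp
qed simp_all

lemma ex_coloring_iff_colored:
  assumes no_col: "\<forall>i. Col i \<notin> rsyms \<tau>" and A: "is_struc \<tau> A" and wf: "wf_fm (colors \<tau> k) \<phi>"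
    and "sentence \<phi>" and s: "\<forall>x. s x \<in> univ A"
  shows "(\<exists>B. coloring \<tau> k A B \<and> models B \<phi>)
    \<longleftrightarrow> (\<exists>col. col ` univ A \<subseteq> {1..k} \<and> sat (colored A col) s \<phi>)"
proof
  assume "\<exists>B. coloring \<tau> k A B \<and> models B \<phi>"
  then obtain B where B: "coloring \<tau> k A B" "models B \<phi>" by blast
  then have "sat B s \<phi>"
    using models_iff_sat[OF \<open>sentence \<phi>\<close>, of s B] s coloring_agrees(1)[OF B(1)] by simp
  then have "sat (colored A (color_of k B)) s \<phi>"
    using sat_coloring_iff_colored[OF B(1) A no_col wf s] by simp
  moreover have "color_of k B ` univ A \<subseteq> {1..k}" using color_of_iff(1)[OF B(1)] by blast
  ultimately show "\<exists>col. col ` univ A \<subseteq> {1..k} \<and> sat (colored A col) s \<phi>" by blast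
next
  assume "\<exists>col. col ` univ A \<subseteq> {1..k} \<and> sat (colored A col) s \<phi>"
  then obtain col where col: "col ` univ A \<subseteq> {1..k}" "sat (colored A col) s \<phi>" by blast
  have "models (colored A col) \<phi>"
    using models_iff_sat[OF \<open>sentence \<phi>\<close>, of s "colored A col"] s col(2) by simp
  with coloring_colored[OF no_col A col(1)] show "\<exists>B. coloring \<tau> k A B \<and> models B \<phi>" by blast
qed

fun color_atoms :: "fm \<Rightarrow> nat" where
  "color_atoms (Eq s t) = 0"
| "color_atoms (Rel r ts) = (case r of Col i \<Rightarrow> 1 | _ \<Rightarrow> 0)"
| "color_atoms (Neg \<phi>) = color_atoms \<phi>"
| "color_atoms (Conj \<phi> \<psi>) = color_atoms \<phi> + color_atoms \<psi>"
| "color_atoms (Disj \<phi> \<psi>) = color_atoms \<phi> + color_atoms \<psi>"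
| "color_atoms (Ex x \<phi>) = color_atoms \<phi>"
| "color_atoms (All x \<phi>) = color_atoms \<phi>"

lemma atom_colored_support:
  assumes A: "is_struc \<tau> A" and "is_atom \<psi>" and "wf_fm (colors \<tau> k) \<psi>" and s: "\<forall>x. s x \<in> univ A"
  shows "\<exists>S\<subseteq>univ A. finite S \<and> card S \<le> color_atoms \<psi> \<and>
    (\<forall>col'. (\<forall>a\<in>S. col' a = col a) \<longrightarrow> sat (colored A col') s \<psi> = sat (colored A col) s \<psi>)"
proof (cases "\<exists>i ts. \<psi> = Rel (Col i) ts")
  case True
  then obtain i ts where \<psi>: "\<psi> = Rel (Col i) ts" by blast
  from assms(3)[unfolded \<psi>] obtain t where ts: "ts = [t]" and t: "wf_trm \<tau> t"
    by (rule wf_fm_colors_Col)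
  show ?thesis
    using eval_in_univ[OF A t s] by (intro exI[of _ "{eval A s t}"]) (auto simp: \<psi> ts)
next
  case False
  with \<open>is_atom \<psi>\<close> have "col_free \<psi>" by (cases \<psi> rule: is_atom.cases) auto
  then show ?thesis by (intro exI[of _ "{}"]) (simp add: sat_colored_col_free)
qed

lemma colored_support:
  assumes A: "is_struc \<tau> A"
  shows "nnf \<phi> \<Longrightarrow> no_col_under_all \<phi> \<Longrightarrow> wf_fm (colors \<tau> k) \<phi> \<Longrightarrow> \<forall>x. s x \<in> univ A
    \<Longrightarrow> sat (colored A col) s \<phi> \<Longrightarrow> \<exists>S\<subseteq>univ A. finite S \<and> card S \<le> color_atoms \<phi> \<and>
      (\<forall>col'. (\<forall>a\<in>S. col' a = col a) \<longrightarrow> sat (colored A col') s \<phi>)"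
proof (induction \<phi> arbitrary: s)
  case (Eq t u)
  then show ?case using atom_colored_support[OF A, of "Eq t u" k s col] by auto
next
  case (Rel r ts)
  then show ?case using atom_colored_support[OF A, of "Rel r ts" k s col] by auto
next
  case (Neg \<psi>)
  then show ?case using atom_colored_support[OF A, of \<psi> k s col] by auto
next
  case (Conj \<phi>1 \<phi>2)
  obtain S1 where S1: "S1 \<subseteq> univ A" "finite S1" "card S1 \<le> color_atoms \<phi>1"
    "\<forall>col'. (\<forall>a\<in>S1. col' a = col a) \<longrightarrow> sat (colored A col') s \<phi>1"
    using Conj.IH(1)[of s] Conj.prems by auto
  obtain S2 where S2: "S2 \<subseteq> univ A" "finite S2" "card S2 \<le> color_atoms \<phi>2"
    "\<forall>col'. (\<forall>a\<in>S2. col' a = col a) \<longrightarrow> sat (colored A col') s \<phi>2"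
    using Conj.IH(2)[of s] Conj.prems by auto
  have "card (S1 \<union> S2) \<le> color_atoms (Conj \<phi>1 \<phi>2)"
    using card_Un_le[of S1 S2] S1(3) S2(3) by simp
  with S1 S2 show ?case by (intro exI[of _ "S1 \<union> S2"]) auto
next
  case (Disj \<phi>1 \<phi>2)
  then consider "sat (colored A col) s \<phi>1" | "sat (colored A col) s \<phi>2" by auto
  then show ?case
  proof cases
    case 1
    then obtain S where S: "S \<subseteq> univ A" "finite S" "card S \<le> color_atoms \<phi>1"
      "\<forall>col'. (\<forall>a\<in>S. col' a = col a) \<longrightarrow> sat (colored A col') s \<phi>1"
      using Disj.IH(1)[of s] Disj.prems by auto
    then show ?thesis by (intro exI[of _ S]) auto
  next
    case 2
    then obtain S where S: "S \<subseteq> univ A" "finite S" "card S \<le> color_atoms \<phi>2"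
      "\<forall>col'. (\<forall>a\<in>S. col' a = col a) \<longrightarrow> sat (colored A col') s \<phi>2"
      using Disj.IH(2)[of s] Disj.prems by auto
    then show ?thesis by (intro exI[of _ S]) auto
  qed
next
  case (Ex x \<psi>)
  then obtain a where a: "a \<in> univ A" "sat (colored A col) (s(x := a)) \<psi>" by auto
  have s': "\<forall>y. (s(x := a)) y \<in> univ A" using Ex.prems(4) a(1) by simp
  have \<psi>: "nnf \<psi>" "no_col_under_all \<psi>" "wf_fm (colors \<tau> k) \<psi>" using Ex.prems(1-3) by simp_all
  obtain S where S: "S \<subseteq> univ A" "finite S" "card S \<le> color_atoms \<psi>"
    "\<forall>col'. (\<forall>a\<in>S. col' a = col a) \<longrightarrow> sat (colored A col') (s(x := a)) \<psi>"
    using Ex.IH[OF \<psi> s' a(2)] by blast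
  then show ?case using a(1) by (intro exI[of _ S]) auto
next
  case (All x \<psi>)
  then have "col_free (All x \<psi>)" by simp
  then show ?case using All.prems by (intro exI[of _ "{}"]) (simp add: sat_colored_col_free)
qed

definition Tru :: fm where "Tru = Eq (App Zero []) (App Zero [])"
definition Fls :: fm where "Fls = Neg Tru"
definition Disjs :: "fm list \<Rightarrow> fm" where "Disjs fs = foldr Disj fs Fls"
definition Conjs :: "fm list \<Rightarrow> fm" where "Conjs fs = foldr Conj fs Tru"

lemma sat_Tru[simp]: "sat A s Tru" by (simp add: Tru_def)
lemma sat_Fls[simp]: "\<not> sat A s Fls" by (simp add: Fls_def)
lemma free_Tru[simp]: "free Tru = {}" "free Fls = {}" by (auto simp: Tru_def Fls_def)
lemma bound_Tru[simp]: "bound Tru = {}" "bound Fls = {}" by (auto simp: Tru_def Fls_def)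
lemma qr_Tru[simp]: "qr Tru = 0" "qr Fls = 0" by (auto simp: Tru_def Fls_def)
lemma wf_Tru: "arith_sig \<tau> \<Longrightarrow> wf_fm \<tau> Tru" "arith_sig \<tau> \<Longrightarrow> wf_fm \<tau> Fls"
  by (auto simp: Tru_def Fls_def arith_sig_def)

lemma sat_Disjs[simp]: "sat A s (Disjs fs) = (\<exists>f\<in>set fs. sat A s f)"
  by (induction fs) (auto simp: Disjs_def)
lemma sat_Disjs_map: "sat A s (Disjs (map f xs)) = (\<exists>x\<in>set xs. sat A s (f x))"
  by simp
lemma sat_Conjs[simp]: "sat A s (Conjs fs) = (\<forall>f\<in>set fs. sat A s f)"
  by (induction fs) (auto simp: Conjs_def)
lemma free_Disjs[simp]: "free (Disjs fs) = (\<Union>f\<in>set fs. free f)"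
  by (induction fs) (auto simp: Disjs_def)
lemma free_Conjs[simp]: "free (Conjs fs) = (\<Union>f\<in>set fs. free f)"
  by (induction fs) (auto simp: Conjs_def)
lemma bound_Disjs[simp]: "bound (Disjs fs) = (\<Union>f\<in>set fs. bound f)"
  by (induction fs) (auto simp: Disjs_def)
lemma bound_Conjs[simp]: "bound (Conjs fs) = (\<Union>f\<in>set fs. bound f)"
  by (induction fs) (auto simp: Conjs_def)
lemma wf_Disjs: "arith_sig \<tau> \<Longrightarrow> \<forall>f\<in>set fs. wf_fm \<tau> f \<Longrightarrow> wf_fm \<tau> (Disjs fs)"
  by (induction fs) (auto simp: Disjs_def wf_Tru)
lemma wf_Conjs: "arith_sig \<tau> \<Longrightarrow> \<forall>f\<in>set fs. wf_fm \<tau> f \<Longrightarrow> wf_fm \<tau> (Conjs fs)"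
  by (induction fs) (auto simp: Conjs_def wf_Tru)
lemma qr_Disjs: "\<forall>f\<in>set fs. qr f \<le> K \<Longrightarrow> qr (Disjs fs) \<le> K"
  by (induction fs) (auto simp: Disjs_def)
lemma qr_Conjs: "\<forall>f\<in>set fs. qr f \<le> K \<Longrightarrow> qr (Conjs fs) \<le> K"
  by (induction fs) (auto simp: Conjs_def)

fun subst_colors :: "(nat \<Rightarrow> trm \<Rightarrow> fm) \<Rightarrow> fm \<Rightarrow> fm" where
  "subst_colors F (Eq s t) = Eq s t"
| "subst_colors F (Rel r ts) = (case r of Col i \<Rightarrow> F i (hd ts) | _ \<Rightarrow> Rel r ts)"
| "subst_colors F (Neg \<phi>) = Neg (subst_colors F \<phi>)"
| "subst_colors F (Conj \<phi> \<psi>) = Conj (subst_colors F \<phi>) (subst_colors F \<psi>)"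
| "subst_colors F (Disj \<phi> \<psi>) = Disj (subst_colors F \<phi>) (subst_colors F \<psi>)"
| "subst_colors F (Ex x \<phi>) = Ex x (subst_colors F \<phi>)"
| "subst_colors F (All x \<phi>) = All x (subst_colors F \<phi>)"

fun vars_fm :: "fm \<Rightarrow> nat set" where
  "vars_fm (Eq s t) = vars_trm s \<union> vars_trm t"
| "vars_fm (Rel r ts) = (\<Union>t\<in>set ts. vars_trm t)"
| "vars_fm (Neg \<phi>) = vars_fm \<phi>"
| "vars_fm (Conj \<phi> \<psi>) = vars_fm \<phi> \<union> vars_fm \<psi>"
| "vars_fm (Disj \<phi> \<psi>) = vars_fm \<phi> \<union> vars_fm \<psi>"
| "vars_fm (Ex x \<phi>) = insert x (vars_fm \<phi>)"
| "vars_fm (All x \<phi>) = insert x (vars_fm \<phi>)"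

lemma finite_vars_trm: "finite (vars_trm t)" by (induction t) auto
lemma finite_vars_fm: "finite (vars_fm \<phi>)" by (induction \<phi>) (auto simp: finite_vars_trm)
lemma bound_sub_vars: "bound \<phi> \<subseteq> vars_fm \<phi>" by (induction \<phi>) auto
lemma free_sub_vars: "free \<phi> \<subseteq> vars_fm \<phi>" by (induction \<phi>) auto
lemma finite_bound: "finite (bound \<phi>)" using finite_subset[OF bound_sub_vars finite_vars_fm] .

text \<open>F may read the parameter variables in P, all at least V; since the variables of \<phi> lie below V,
  they keep their values from s0, and the variables of the arguments t cannot be captured in F.\<close>

lemma sat_subst_colors:
  assumes F: "\<And>i t s. (\<forall>v\<in>P. s v = s0 v) \<Longrightarrow> (\<forall>y\<in>vars_trm t. y < V)
      \<Longrightarrow> sat A s (F i t) = (col (eval A s t) = i)"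
  and P: "\<forall>v\<in>P. V \<le> v"
  shows "wf_fm (colors \<tau> k) \<phi> \<Longrightarrow> (\<forall>y\<in>vars_fm \<phi>. y < V) \<Longrightarrow> (\<forall>v\<in>P. s v = s0 v) \<Longrightarrow>
    sat A s (subst_colors F \<phi>) = sat (colored A col) s \<phi>"
proof (induction \<phi> arbitrary: s)
  case (Rel r ts)
  show ?case
  proof (cases "\<exists>i. r = Col i")
    case True
    then obtain i where r: "r = Col i" by auto
    from Rel.prems(1)[unfolded r] obtain t where ts: "ts = [t]" by (rule wf_fm_colors_Col)
    have "sat A s (F i t) = (col (eval A s t) = i)" using F Rel.prems ts by auto
    then show ?thesis using r ts by simp
  next
    case False
    then have "subst_colors F (Rel r ts) = Rel r ts" by (cases r) auto
    then show ?thesis using False by simp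
  qed
next
  case (Ex x \<phi>)
  have "x \<notin> P" using Ex.prems P by fastforce
  then have "\<And>a. \<forall>v\<in>P. (s(x:=a)) v = s0 v" using Ex.prems by auto
  then show ?case using Ex.IH Ex.prems by simp
next
  case (All x \<phi>)
  have "x \<notin> P" using All.prems P by fastforce
  then have "\<And>a. \<forall>v\<in>P. (s(x:=a)) v = s0 v" using All.prems by auto
  then show ?case using All.IH All.prems by simp
qed auto

lemma wf_subst_colors:
  "wf_fm (colors \<tau> k) \<phi> \<Longrightarrow> (\<forall>i t. wf_trm \<tau> t \<longrightarrow> wf_fm \<tau> (F i t)) \<Longrightarrow> wf_fm \<tau> (subst_colors F \<phi>)"
proof (induction \<phi>)
  case (Rel r ts)
  show ?case
  proof (cases "\<exists>i. r = Col i")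
    case True
    then obtain i where r: "r = Col i" by auto
    from Rel.prems(1)[unfolded r] obtain t where ts: "ts = [t]" by (rule wf_fm_colors_Col)
    then show ?thesis using Rel.prems r by simp
  next
    case False
    then have "subst_colors F (Rel r ts) = Rel r ts" by (cases r) auto
    then show ?thesis using False Rel.prems by auto
  qed
qed auto

lemma free_subst_colors:
  "wf_fm (colors \<tau> k) \<phi> \<Longrightarrow> (\<forall>i t. free (F i t) \<subseteq> vars_trm t \<union> P) \<Longrightarrow> P \<inter> bound \<phi> = {}
    \<Longrightarrow> free (subst_colors F \<phi>) \<subseteq> free \<phi> \<union> P"
proof (induction \<phi>)
  case (Rel r ts)
  show ?case
  proof (cases "\<exists>i. r = Col i")
    case True
    then obtain i where r: "r = Col i" by auto
    from Rel.prems(1)[unfolded r] obtain t where ts: "ts = [t]" by (rule wf_fm_colors_Col)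
    then show ?thesis using Rel.prems r by auto
  next
    case False
    then have "subst_colors F (Rel r ts) = Rel r ts" by (cases r) auto
    then show ?thesis by auto
  qed
next
  case (Conj \<phi>1 \<phi>2)
  have "P \<inter> bound \<phi>1 = {}" "P \<inter> bound \<phi>2 = {}" using Conj.prems by auto
  then show ?case using Conj by auto
next
  case (Disj \<phi>1 \<phi>2)
  have "P \<inter> bound \<phi>1 = {}" "P \<inter> bound \<phi>2 = {}" using Disj.prems by auto
  then show ?case using Disj by auto
next
  case (Ex x \<phi>) then show ?case by auto
next
  case (All x \<phi>) then show ?case by auto
qed auto

lemma qr_subst_colors: "(\<forall>i t. qr (F i t) \<le> K) \<Longrightarrow> qr (subst_colors F \<phi>) \<le> qr \<phi> + K"
proof (induction \<phi>)
  case (Rel r ts) then show ?case by (cases r) auto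
qed auto

lemma qr_le_subst_colors: "qr \<phi> \<le> qr (subst_colors F \<phi>)"
  by (induction \<phi>) auto

lemma bound_subst_colors: "(\<forall>i t. bound (F i t) \<subseteq> BF) \<Longrightarrow> bound (subst_colors F \<phi>) \<subseteq> bound \<phi> \<union> BF"
proof (induction \<phi>)
  case (Rel r ts) then show ?case by (cases r) auto
qed auto

lemma bound_le_subst_colors: "bound \<phi> \<subseteq> bound (subst_colors F \<phi>)"
  by (induction \<phi>) auto

definition color_lists :: "nat \<Rightarrow> nat \<Rightarrow> nat list list" where
  "color_lists k M = List.n_lists (Suc M) [1..<Suc k]"

lemma set_color_lists: "set (color_lists k M) = {g. length g = Suc M \<and> set g \<subseteq> {1..k}}"
  unfolding color_lists_def set_n_lists by auto

definition first_hit_fm :: "(nat \<Rightarrow> trm \<Rightarrow> fm) \<Rightarrow> nat \<Rightarrow> nat list \<Rightarrow> nat \<Rightarrow> trm \<Rightarrow> fm" where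
  "first_hit_fm \<theta> M g i t = Disjs (map (\<lambda>j. Conj (\<theta> j t) (Conjs (map (\<lambda>j'. Neg (\<theta> j' t)) [1..<j])))
       (filter (\<lambda>j. g!j = i) [1..<Suc M])
     @ (if g!0 = i then [Conjs (map (\<lambda>j. Neg (\<theta> j t)) [1..<Suc M])] else []))"

definition first_hit_color :: "(nat \<Rightarrow> nat \<Rightarrow> bool) \<Rightarrow> nat \<Rightarrow> nat list \<Rightarrow> nat \<Rightarrow> nat" where
  "first_hit_color \<Theta> M g a = (if \<exists>j\<in>{1..M}. \<Theta> j a then g ! (LEAST j. j \<in> {1..M} \<and> \<Theta> j a) else g ! 0)"

lemma sat_first_hit_fm_iff:
  "sat A s (first_hit_fm \<theta> M g i t) =
    ((\<exists>j\<in>{1..M}. g!j = i \<and> sat A s (\<theta> j t) \<and> (\<forall>j'\<in>{1..<j}. \<not> sat A s (\<theta> j' t)))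
     \<or> (g!0 = i \<and> (\<forall>j\<in>{1..M}. \<not> sat A s (\<theta> j t))))"
proof -
  have e1: "(\<exists>f\<in>set (map (\<lambda>j. Conj (\<theta> j t) (Conjs (map (\<lambda>j'. Neg (\<theta> j' t)) [1..<j])))
       (filter (\<lambda>j. g!j = i) [1..<Suc M])). sat A s f)
     = (\<exists>j\<in>{1..M}. g!j = i \<and> sat A s (\<theta> j t) \<and> (\<forall>j'\<in>{1..<j}. \<not> sat A s (\<theta> j' t)))"
  proof
    assume "\<exists>f\<in>set (map (\<lambda>j. Conj (\<theta> j t) (Conjs (map (\<lambda>j'. Neg (\<theta> j' t)) [1..<j])))
       (filter (\<lambda>j. g!j = i) [1..<Suc M])). sat A s f"
    then show "\<exists>j\<in>{1..M}. g!j = i \<and> sat A s (\<theta> j t) \<and> (\<forall>j'\<in>{1..<j}. \<not> sat A s (\<theta> j' t))"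
      by (auto simp del: upt_Suc)
  next
    assume "\<exists>j\<in>{1..M}. g!j = i \<and> sat A s (\<theta> j t) \<and> (\<forall>j'\<in>{1..<j}. \<not> sat A s (\<theta> j' t))"
    then obtain j where j: "j\<in>{1..M}" "g!j = i" "sat A s (\<theta> j t)" "\<forall>j'\<in>{1..<j}. \<not> sat A s (\<theta> j' t)"
      by blast
    show "\<exists>f\<in>set (map (\<lambda>j. Conj (\<theta> j t) (Conjs (map (\<lambda>j'. Neg (\<theta> j' t)) [1..<j])))
       (filter (\<lambda>j. g!j = i) [1..<Suc M])). sat A s f"
      by (rule bexI[of _ "Conj (\<theta> j t) (Conjs (map (\<lambda>j'. Neg (\<theta> j' t)) [1..<j]))"])
        (use j in \<open>auto simp del: upt_Suc\<close>)
  qed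
  have e2: "(\<exists>f\<in>set (if g!0 = i then [Conjs (map (\<lambda>j. Neg (\<theta> j t)) [1..<Suc M])] else []). sat A s f)
     = (g!0 = i \<and> (\<forall>j\<in>{1..M}. \<not> sat A s (\<theta> j t)))"
    by (auto simp del: upt_Suc)
  show ?thesis unfolding first_hit_fm_def sat_Disjs set_append bex_Un e1 e2 ..
qed

lemma sat_first_hit_fm: assumes "\<And>j. sat A s (\<theta> j t) = \<Theta> j (eval A s t)"
  shows "sat A s (first_hit_fm \<theta> M g i t) = (first_hit_color \<Theta> M g (eval A s t) = i)"
proof -
  define a where "a = eval A s t"
  have L: "sat A s (first_hit_fm \<theta> M g i t) = ((\<exists>j\<in>{1..M}. g!j = i \<and> \<Theta> j a \<and> (\<forall>j'\<in>{1..<j}. \<not> \<Theta> j' a))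
     \<or> (g!0 = i \<and> (\<forall>j\<in>{1..M}. \<not> \<Theta> j a)))"
    unfolding sat_first_hit_fm_iff assms a_def by simp
  show ?thesis
  proof (cases "\<exists>j\<in>{1..M}. \<Theta> j a")
    case True
    define j0 where "j0 = (LEAST j. j \<in> {1..M} \<and> \<Theta> j a)"
    have j0: "j0 \<in> {1..M} \<and> \<Theta> j0 a" unfolding j0_def using True by (metis (mono_tags, lifting) LeastI)
    have min: "\<And>j. j \<in> {1..M} \<and> \<Theta> j a \<Longrightarrow> j0 \<le> j" unfolding j0_def by (rule Least_le)
    have c: "first_hit_color \<Theta> M g a = g ! j0" unfolding first_hit_color_def j0_def using True by simp
    have "(\<exists>j\<in>{1..M}. g!j = i \<and> \<Theta> j a \<and> (\<forall>j'\<in>{1..<j}. \<not> \<Theta> j' a)) = (g ! j0 = i)"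
    proof
      assume "\<exists>j\<in>{1..M}. g!j = i \<and> \<Theta> j a \<and> (\<forall>j'\<in>{1..<j}. \<not> \<Theta> j' a)"
      then obtain j where j: "j\<in>{1..M}" "g!j = i" "\<Theta> j a" "\<forall>j'\<in>{1..<j}. \<not> \<Theta> j' a" by blast
      have "j0 \<le> j" using min j by blast
      moreover have "\<not> j0 < j" using j j0 by auto
      ultimately show "g ! j0 = i" using j by simp
    next
      assume "g ! j0 = i"
      moreover have "\<forall>j'\<in>{1..<j0}. \<not> \<Theta> j' a" using min j0 by fastforce
      ultimately show "\<exists>j\<in>{1..M}. g!j = i \<and> \<Theta> j a \<and> (\<forall>j'\<in>{1..<j}. \<not> \<Theta> j' a)" using j0 by blast
    qed
    then show ?thesis using L c True a_def by auto
  next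
    case False
    then show ?thesis using L unfolding first_hit_color_def a_def by auto
  qed
qed

lemma first_hit_fm_syntax:
  assumes "\<And>j. free (\<theta> j t) \<subseteq> X" "\<And>j. bound (\<theta> j t) \<subseteq> BF" "\<And>j. qr (\<theta> j t) \<le> K"
  shows "free (first_hit_fm \<theta> M g i t) \<subseteq> X" and "bound (first_hit_fm \<theta> M g i t) \<subseteq> BF"
    and "qr (first_hit_fm \<theta> M g i t) \<le> K"
proof -
  show "free (first_hit_fm \<theta> M g i t) \<subseteq> X" unfolding first_hit_fm_def using assms(1) by auto
  show "bound (first_hit_fm \<theta> M g i t) \<subseteq> BF" unfolding first_hit_fm_def using assms(2) by auto
  show "qr (first_hit_fm \<theta> M g i t) \<le> K" unfolding first_hit_fm_def using assms(3)
    by (auto intro!: qr_Disjs qr_Conjs)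
qed

lemma wf_first_hit_fm: "arith_sig \<tau> \<Longrightarrow> (\<And>j. wf_fm \<tau> (\<theta> j t)) \<Longrightarrow> wf_fm \<tau> (first_hit_fm \<theta> M g i t)"
  unfolding first_hit_fm_def by (auto intro!: wf_Disjs wf_Conjs)

lemma first_hit_color_in_range: assumes "g \<in> set (color_lists k M)"
  shows "first_hit_color \<Theta> M g a \<in> {1..k}"
proof -
  have g: "length g = Suc M" "set g \<subseteq> {1..k}" using assms unfolding set_color_lists by auto
  have "\<exists>j\<le>M. first_hit_color \<Theta> M g a = g ! j"
  proof (cases "\<exists>j\<in>{1..M}. \<Theta> j a")
    case True
    then have "(LEAST j. j \<in> {1..M} \<and> \<Theta> j a) \<in> {1..M}" by (metis (mono_tags, lifting) LeastI)
    then show ?thesis unfolding first_hit_color_def using True by auto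
  next
    case False then show ?thesis unfolding first_hit_color_def by auto
  qed
  then obtain j where "j \<le> M" "first_hit_color \<Theta> M g a = g ! j" by blast
  then show ?thesis using g by (metis in_mono less_Suc_eq_le nth_mem)
qed

lemma first_hit_color_least:
  assumes "j0 \<in> {1..M}" and "\<Theta> j0 a" and "\<And>j. j \<in> {1..<j0} \<Longrightarrow> \<not> \<Theta> j a"
  shows "first_hit_color \<Theta> M g a = g ! j0"
proof -
  have "(LEAST j. j \<in> {1..M} \<and> \<Theta> j a) = j0"
    by (rule Least_equality) (use assms in \<open>auto simp: not_less[symmetric]\<close>)
  with assms(1,2) show ?thesis unfolding first_hit_color_def by auto
qed

lemma ex_color_list:
  assumes "1 \<le> k" and "\<And>j. j \<in> {1..M} \<Longrightarrow> c j \<in> {1..k}"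
  shows "\<exists>g\<in>set (color_lists k M). \<forall>j\<in>{1..M}. g ! j = c j"
proof
  let ?g = "map (\<lambda>j. if j = 0 then 1 else c j) [0..<Suc M]"
  show "?g \<in> set (color_lists k M)"
    unfolding set_color_lists using assms by (auto simp del: upt_Suc)
  show "\<forall>j\<in>{1..M}. ?g ! j = c j" by (auto simp del: upt_Suc)
qed

definition absdiff :: "nat \<Rightarrow> nat \<Rightarrow> nat" where
  "absdiff x y = (if x < y then y - x else x - y)"

lemma dvd_absdiff_iff_mod_eq: "q dvd absdiff x y \<longleftrightarrow> x mod q = y mod q"
  unfolding absdiff_def
  using mod_eq_dvd_iff_nat[of x y q] mod_eq_dvd_iff_nat[of y x q] by auto

lemma coprime_mult_Suc:
  assumes "absdiff a b dvd L"
  shows "coprime (a * L + 1) (b * L + 1 :: nat)"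
proof (rule coprimeI)
  fix d assume da: "d dvd a * L + 1" and db: "d dvd b * L + 1"
  have "coprime d L"
  proof (rule coprimeI)
    fix e assume "e dvd d" "e dvd L"
    with da have "e dvd a * L + 1" "e dvd a * L" by auto
    then have "e dvd 1" using dvd_add_right_iff by blast
    then show "is_unit e" by simp
  qed
  have "d dvd absdiff a b * L"
    using da db dvd_diff_nat[OF db da] dvd_diff_nat[OF da db]
    unfolding absdiff_def by (auto simp: diff_mult_distrib)
  with \<open>coprime d L\<close> have "d dvd L"
    using assms coprime_dvd_mult_left_iff dvd_trans by blast
  with \<open>coprime d L\<close> show "is_unit d" by (rule coprime_common_divisor[OF _ dvd_refl])
qed

definition diff_prod :: "(nat \<Rightarrow> nat) \<Rightarrow> nat set \<Rightarrow> nat" where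
  "diff_prod f S = (\<Prod>(x, y)\<in>{(x, y). x \<in> S \<and> y \<in> S \<and> x \<noteq> y}. absdiff (f x) (f y))"

lemma finite_distinct_pairs: "finite S \<Longrightarrow> finite {(x, y). x \<in> S \<and> y \<in> S \<and> x \<noteq> y}"
  by (rule finite_subset[of _ "S \<times> S"]) auto

lemma absdiff_pos_iff: "0 < absdiff x y \<longleftrightarrow> x \<noteq> y"
  unfolding absdiff_def by auto

lemma diff_prod_pos: "inj_on f S \<Longrightarrow> 0 < diff_prod f S"
  unfolding diff_prod_def by (intro prod_pos) (auto simp: absdiff_pos_iff inj_on_def)

lemma dvd_diff_prod:
  assumes "finite S" "x \<in> S" "y \<in> S" "x \<noteq> y"
  shows "absdiff (f x) (f y) dvd diff_prod f S"
  unfolding diff_prod_def using assms finite_distinct_pairs[OF assms(1)]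
  by (intro dvd_prodI[where f = "\<lambda>(x, y). absdiff (f x) (f y)" and a = "(x, y)", simplified]) auto

lemma diff_prod_le:
  assumes "finite S" "card S \<le> m" "1 \<le> n" "\<forall>x\<in>S. f x < n"
  shows "diff_prod f S \<le> n ^ (m * m)"
proof -
  let ?P = "{(x, y). x \<in> S \<and> y \<in> S \<and> x \<noteq> y}"
  have "card ?P \<le> card (S \<times> S)" using assms(1) by (intro card_mono) auto
  also have "\<dots> \<le> m * m" using assms(2) by (simp add: card_cartesian_product mult_mono)
  moreover have "absdiff (f x) (f y) \<le> n" if "x \<in> S" "y \<in> S" for x y
    using assms(4) that unfolding absdiff_def by (simp add: less_imp_le_nat le_trans[OF diff_le_self])
  ultimately show ?thesis
    unfolding diff_prod_def using assms(3) by (intro prod_le_power) auto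
qed

text \<open>The moduli t * N! + 1 for t = 1..N are pairwise coprime and their product exceeds (N!)^N,
  so they cannot all divide the product of the fewer than m^2 differences of elements of S.\<close>

lemma ex_mod_inj_on:
  fixes S :: "nat set"
  assumes "finite S" and "S \<subseteq> {..<n}" and "card S \<le> m" and "1 \<le> N" and "1 \<le> n"
    and "n ^ (m * m) \<le> fact N ^ N"
  shows "\<exists>q. 0 < q \<and> q \<le> fact (Suc N) \<and> inj_on (\<lambda>x. x mod q) S"
proof (rule ccontr)
  assume "\<not> ?thesis"
  then have none: "\<not> inj_on (\<lambda>x. x mod q) S" if "0 < q" "q \<le> fact (Suc N)" for q
    using that by blast
  let ?F = "fact N :: nat"
  have "t * ?F + 1 dvd diff_prod id S" if "t \<in> {1..N}" for t
  proof -
    have "t * ?F + 1 \<le> N * ?F + ?F" using that by (intro add_mono mult_right_mono) auto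
    also have "\<dots> = fact (Suc N)" by (simp add: algebra_simps)
    finally have "\<not> inj_on (\<lambda>x. x mod (t * ?F + 1)) S" by (intro none) simp
    then obtain x y where "x \<in> S" "y \<in> S" "x \<noteq> y" "x mod (t * ?F + 1) = y mod (t * ?F + 1)"
      unfolding inj_on_def by blast
    then show ?thesis
      using dvd_diff_prod[OF assms(1), of x y id] dvd_absdiff_iff_mod_eq dvd_trans by fastforce
  qed
  moreover have "coprime (i * ?F + 1) (j * ?F + 1)" if "i \<in> {1..N}" "j \<in> {1..N}" "i \<noteq> j" for i j
    using that by (intro coprime_mult_Suc dvd_fact) (auto simp: absdiff_def)
  ultimately have "(\<Prod>t\<in>{1..N}. t * ?F + 1) dvd diff_prod id S"
    using coprime_cong_prod_nat[of "{1..N}" "\<lambda>t. t * ?F + 1" "diff_prod id S" 0]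
    by (simp add: cong_0_iff)
  then have "(\<Prod>t\<in>{1..N}. t * ?F + 1) \<le> diff_prod id S"
    using diff_prod_pos[of id] by (intro dvd_imp_le) auto
  also have "\<dots> \<le> n ^ (m * m)" using diff_prod_le[of S m n id] assms by auto
  also have "\<dots> \<le> ?F ^ N" by (rule assms(6))
  also have "\<dots> < (?F + 1) ^ N" using assms(4) by (intro power_strict_mono) auto
  also have "\<dots> \<le> (\<Prod>t\<in>{1..N}. t * ?F + 1)"
    using prod_mono[of "{1..N}" "\<lambda>_. ?F + 1" "\<lambda>t. t * ?F + 1"] by simp
  finally show False by simp
qed

text \<open>Chinese remaindering; the moduli (x mod q + 1) * L + 1 are pairwise coprime because L is a
  multiple of all differences of the residues x mod q (coprime_mult_Suc).\<close>

lemma ex_crt_code: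
  assumes fin: "finite S" and "0 < q" and inj: "inj_on (\<lambda>x. x mod q) S" and "card S \<le> m"
    and "1 \<le> m" and c: "\<forall>x\<in>S. c x \<in> {1..m}"
  shows "\<exists>L R. L \<le> m * q ^ (m * m) \<and> R < (\<Prod>x\<in>S. (x mod q + 1) * L + 1)
     \<and> (\<forall>x\<in>S. R mod ((x mod q + 1) * L + 1) = c x)"
proof -
  define L where "L = m * diff_prod (\<lambda>x. x mod q) S"
  define p where "p x = (x mod q + 1) * L + 1" for x
  have "m \<le> L" unfolding L_def using diff_prod_pos[OF inj] by simp
  have "coprime (p x) (p y)" if "x \<in> S" "y \<in> S" "x \<noteq> y" for x y
    unfolding p_def using dvd_diff_prod[OF fin that, of "\<lambda>x. x mod q"]
    by (intro coprime_mult_Suc) (auto simp: L_def absdiff_def)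
  then obtain R where R: "R < (\<Prod>x\<in>S. p x)" "\<forall>x\<in>S. [R = c x] (mod p x)"
    using chinese_remainder_unique_nat[of S p c] fin by (auto simp: p_def)
  have "R mod p x = c x" if "x \<in> S" for x
  proof -
    have "c x < p x" using c that \<open>m \<le> L\<close> unfolding p_def by (auto intro: le_less_trans)
    then show ?thesis using R(2) that unfolding cong_def by simp
  qed
  moreover have "L \<le> m * q ^ (m * m)"
    unfolding L_def using diff_prod_le[OF fin \<open>card S \<le> m\<close>, of q] \<open>0 < q\<close> by simp
  ultimately show ?thesis using R(1) unfolding p_def by blast
qed

lemma add_2_le_fact: "3 \<le> k \<Longrightarrow> k + 2 \<le> (fact k :: nat)"
proof (induction k rule: nat_induct_at_least)
  case base then show ?case by (simp add: numeral_3_eq_3)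
next
  case (Suc k)
  have "Suc k + 2 \<le> Suc k * (k + 2)" using Suc by (simp add: algebra_simps)
  also have "\<dots> \<le> Suc k * fact k" using Suc by (intro mult_left_mono) auto
  finally show ?case by simp
qed

lemma fact_Suc_Suc_le_fact_pow4:
  assumes "3 \<le> N" and "m \<le> Suc N"
  shows "fact (Suc (Suc N)) + m + 1 \<le> (fact N :: nat) ^ 4"
proof -
  have "fact (Suc (Suc N)) + m + 1 \<le> 2 * (fact (Suc (Suc N)) :: nat)"
    using assms(2) fact_ge_self[of "Suc (Suc N)"] by linarith
  also have "\<dots> = (2 * (N + 1)) * (N + 2) * fact N" by (simp add: algebra_simps)
  also have "\<dots> \<le> ((N + 2) * (N + 2)) * (N + 2) * fact N"
    by (intro mult_right_mono) auto
  also have "\<dots> \<le> (fact N * fact N) * fact N * fact N"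
    using add_2_le_fact[OF assms(1)] by (intro mult_right_mono mult_mono) auto
  finally show ?thesis by (simp add: power4_eq_xxxx mult_ac)
qed

definition code_exp :: "nat \<Rightarrow> nat" where
  "code_exp m = (m * m + 3) * m"

definition fact_level_bound :: "nat \<Rightarrow> nat" where
  "fact_level_bound m = 4 * code_exp m * (m * m) + m + 4"

definition large_threshold :: "nat \<Rightarrow> nat" where
  "large_threshold m = fact (fact_level_bound m) ^ fact_level_bound m"

lemma less_large_threshold: "m < large_threshold m"
proof -
  have "m < fact_level_bound m" unfolding fact_level_bound_def by simp
  also have "\<dots> \<le> fact (fact_level_bound m)" by (rule fact_ge_self)
  also have "\<dots> \<le> large_threshold m"
    unfolding large_threshold_def fact_level_bound_def by (intro self_le_power) auto
  finally show ?thesis .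
qed

text \<open>Take N least with n^(m^2) \<le> (N!)^N. Then ((N - 1)!)^(N - 1) < n^(m^2), and N exceeds
  fact_level_bound m because n > large_threshold m; so (N + 1)! + m + 1 \<le> ((N - 1)!)^4 forces
  ((N + 1)! + m + 1)^(code_exp m) < n.\<close>

lemma ex_fact_level:
  assumes "1 \<le> m" and n: "large_threshold m < n"
  shows "\<exists>N. 1 \<le> N \<and> n ^ (m * m) \<le> fact N ^ N \<and> (fact (Suc N) + m + 1) ^ code_exp m < n"
proof -
  let ?P = "\<lambda>N. n ^ (m * m) \<le> (fact N :: nat) ^ N"
  have n_le: "n \<le> n ^ (m * m)" using n assms(1) by (intro self_le_power) auto
  have "n ^ (m * m) \<le> fact (n ^ (m * m))" by (rule fact_ge_self)
  also have "\<dots> \<le> fact (n ^ (m * m)) ^ n ^ (m * m)" using n by (intro self_le_power) auto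
  finally have "?P (n ^ (m * m))" .
  then have PN: "?P (LEAST N. ?P N)" by (rule LeastI)
  define N where "N = (LEAST N. ?P N) - 1"
  have "fact_level_bound m < Suc N"
  proof (rule ccontr)
    assume "\<not> ?thesis"
    then have "(LEAST N. ?P N) \<le> fact_level_bound m" unfolding N_def by simp
    then have "fact (LEAST N. ?P N) ^ (LEAST N. ?P N) \<le> large_threshold m"
      unfolding large_threshold_def
      by (meson fact_mono power_mono power_increasing fact_ge_1 order_trans zero_le)
    with PN n n_le show False by linarith
  qed
  then have Suc_N: "(LEAST N. ?P N) = Suc N"
    unfolding N_def fact_level_bound_def by (cases "LEAST N. ?P N") auto
  have "\<not> ?P N" using not_less_Least[of N ?P] Suc_N by simp
  have bound: "4 * code_exp m * (m * m) + m + 3 \<le> N"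
    using \<open>fact_level_bound m < Suc N\<close> unfolding fact_level_bound_def by simp
  have "((fact (Suc (Suc N)) + m + 1) ^ code_exp m) ^ (m * m) \<le> ((fact N ^ 4) ^ code_exp m) ^ (m * m)"
    using fact_Suc_Suc_le_fact_pow4[of N m] bound by (intro power_mono) auto
  also have "\<dots> = fact N ^ (4 * code_exp m * (m * m))" by (simp add: power_mult[symmetric])
  also have "\<dots> \<le> fact N ^ N" using bound by (intro power_increasing) auto
  also have "\<dots> < n ^ (m * m)" using \<open>\<not> ?P N\<close> by simp
  finally have "(fact (Suc (Suc N)) + m + 1) ^ code_exp m < n"
    by (rule power_less_imp_less_base) simp
  moreover have "?P (Suc N)" using PN Suc_N by simp
  ultimately show ?thesis by (intro exI[of _ "Suc N"]) simp
qed

lemma code_modulus_le: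
  assumes "0 < q" and "L \<le> m * q ^ (m * m)"
  shows "(x mod q + 1) * L + 1 \<le> (q + m + 1) ^ (m * m + 3)"
proof -
  let ?Q = "q + m + 1"
  have "m * q ^ (m * m) \<le> ?Q * ?Q ^ (m * m)" by (intro mult_le_mono power_mono) auto
  with assms(2) have "L \<le> ?Q * ?Q ^ (m * m)" by (rule le_trans)
  moreover have "x mod q + 1 \<le> ?Q" using mod_less_divisor[OF assms(1), of x] by simp
  ultimately have "(x mod q + 1) * L \<le> ?Q * (?Q * ?Q ^ (m * m))" by (intro mult_mono) auto
  also have "\<dots> = ?Q ^ (m * m + 2)" by (simp add: eval_nat_numeral)
  finally have "(x mod q + 1) * L \<le> ?Q ^ (m * m + 2)" .
  moreover have "0 < ?Q ^ (m * m + 2)" by simp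
  ultimately have "(x mod q + 1) * L + 1 \<le> 2 * ?Q ^ (m * m + 2)" by linarith
  also have "\<dots> \<le> ?Q * ?Q ^ (m * m + 2)" using assms(1) by (intro mult_right_mono) auto
  also have "\<dots> = ?Q ^ (m * m + 3)" by (simp add: eval_nat_numeral)
  finally show ?thesis .
qed

lemma ex_code_params:
  assumes m: "1 \<le> m" and n: "large_threshold m < n" and fin: "finite S" and "S \<subseteq> {..<n}"
    and card: "card S \<le> m" and c: "\<forall>x\<in>S. c x \<in> {1..m}"
  shows "\<exists>q L R. 0 < q \<and> q < n \<and> L < n \<and> R < n \<and>
    (\<forall>x\<in>S. (x mod q + 1) * L + 1 < n \<and> R mod ((x mod q + 1) * L + 1) = c x)"
proof -
  obtain N where N: "1 \<le> N" "n ^ (m * m) \<le> fact N ^ N" "(fact (Suc N) + m + 1) ^ code_exp m < n"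
    using ex_fact_level[OF m n] by blast
  obtain q where q: "0 < q" "q \<le> fact (Suc N)" "inj_on (\<lambda>x. x mod q) S"
    using ex_mod_inj_on[OF fin \<open>S \<subseteq> {..<n}\<close> card N(1) _ N(2)] n by auto
  obtain L R where L: "L \<le> m * q ^ (m * m)" and R: "R < (\<Prod>x\<in>S. (x mod q + 1) * L + 1)"
    and R_mod: "\<forall>x\<in>S. R mod ((x mod q + 1) * L + 1) = c x"
    using ex_crt_code[OF fin q(1) q(3) card m c] by blast
  let ?Q = "q + m + 1"
  have small: "?Q ^ j < n" if "j \<le> code_exp m" for j
  proof -
    have "?Q ^ j \<le> ?Q ^ code_exp m" using that by (intro power_increasing) auto
    also have "\<dots> \<le> (fact (Suc N) + m + 1) ^ code_exp m" using q(2) by (intro power_mono) auto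
    finally show ?thesis using N(3) by simp
  qed
  have "m * m + 3 \<le> code_exp m" unfolding code_exp_def using m by simp
  then have exps: "1 \<le> code_exp m" "m * m + 1 \<le> code_exp m" by simp_all
  have "(\<Prod>x\<in>S. (x mod q + 1) * L + 1) \<le> (?Q ^ (m * m + 3)) ^ m"
    using code_modulus_le[OF q(1) L] card by (intro prod_le_power) auto
  also have "\<dots> < n" using small[of "code_exp m"] by (simp add: code_exp_def power_mult)
  finally have prod: "(\<Prod>x\<in>S. (x mod q + 1) * L + 1) < n" .
  have moduli: "(x mod q + 1) * L + 1 < n" if "x \<in> S" for x
  proof -
    have "(x mod q + 1) * L + 1 \<le> (\<Prod>x\<in>S. (x mod q + 1) * L + 1)"
      using that fin by (intro dvd_imp_le) (auto intro!: prod_pos)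
    with prod show ?thesis by simp
  qed
  have "q < n" using small[of 1] exps by simp
  moreover have "L < n"
  proof -
    have "m * q ^ (m * m) \<le> ?Q * ?Q ^ (m * m)" by (intro mult_le_mono power_mono) auto
    with L have "L \<le> ?Q ^ (m * m + 1)" by simp
    with small[of "m * m + 1"] exps show ?thesis by simp
  qed
  moreover have "R < n" using R prod by simp
  ultimately show ?thesis using q(1) moduli R_mod by blast
qed

fun numeral_trm :: "nat \<Rightarrow> trm" where
  "numeral_trm 0 = App Zero []"
| "numeral_trm (Suc j) = App Succ [numeral_trm j]"

lemma vars_numeral_trm [simp]: "vars_trm (numeral_trm j) = {}"
  by (induction j) auto

lemma wf_numeral_trm: "arith_sig \<tau> \<Longrightarrow> wf_trm \<tau> (numeral_trm j)"
  by (induction j) (auto simp: arith_sig_def)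

definition numeral_val :: "struc \<Rightarrow> nat \<Rightarrow> nat" where
  "numeral_val A j = eval A (\<lambda>_. 0) (numeral_trm j)"

lemma eval_numeral_trm [simp]: "eval A s (numeral_trm j) = numeral_val A j"
  unfolding numeral_val_def by (rule eval_cong) simp

lemma eval_upd_above [simp]: "\<forall>y\<in>vars_trm t. y < V \<Longrightarrow> eval A (s(V + k := a)) t = eval A s t"
  by (rule eval_upd) auto

text \<open>With q, L, R in the variables V, V+1, V+2, the formula says that for u = t mod q and
  w = (u + 1) * L, w is not the last element (so its successor is w + 1) and R mod (w + 1) = j.\<close>

definition code_fm :: "nat \<Rightarrow> nat \<Rightarrow> trm \<Rightarrow> fm" where
  "code_fm V j t = (let q = Var V; L = Var (V+1); R = Var (V+2); u = Var (V+3); w = Var (V+6) in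
     Ex (V+3) (Conj
       (Conj (Ex (V+4) (Ex (V+5) (Conj (Rel Mult [Var (V+4), q, Var (V+5)]) (Rel Add [Var (V+5), u, t]))))
             (Rel Less [u, q]))
       (Ex (V+6) (Conj (Rel Mult [App Succ [u], L, w])
         (Conj (Conj (Rel Less [w, App Succ [w]])
                     (Ex (V+7) (Ex (V+8) (Conj (Rel Mult [Var (V+7), App Succ [w], Var (V+8)])
                                              (Rel Add [Var (V+8), numeral_trm j, R])))))
               (Rel Less [numeral_trm j, App Succ [w]]))))))"

definition mod_rel :: "struc \<Rightarrow> nat \<Rightarrow> nat \<Rightarrow> nat \<Rightarrow> bool" where
  "mod_rel A q x u \<longleftrightarrow> (\<exists>a\<in>univ A. \<exists>b\<in>univ A. rint A Mult [a, q, b] \<and> rint A Add [b, u, x])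
     \<and> rint A Less [u, q]"

definition rem_rel :: "struc \<Rightarrow> nat \<Rightarrow> nat \<Rightarrow> nat \<Rightarrow> bool" where
  "rem_rel A w c R \<longleftrightarrow> (rint A Less [w, fint A Succ [w]]
     \<and> (\<exists>e\<in>univ A. \<exists>f\<in>univ A. rint A Mult [e, fint A Succ [w], f] \<and> rint A Add [f, c, R]))
     \<and> rint A Less [c, fint A Succ [w]]"

definition code_rel :: "struc \<Rightarrow> nat \<Rightarrow> nat \<Rightarrow> nat \<Rightarrow> nat \<Rightarrow> nat \<Rightarrow> bool" where
  "code_rel A q L R j x \<longleftrightarrow> (\<exists>u\<in>univ A. mod_rel A q x u
     \<and> (\<exists>w\<in>univ A. rint A Mult [fint A Succ [u], L, w] \<and> rem_rel A w (numeral_val A j) R))"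

lemma sat_code_fm:
  "\<forall>y\<in>vars_trm t. y < V \<Longrightarrow> sat A s (code_fm V j t) = code_rel A (s V) (s (V+1)) (s (V+2)) j (eval A s t)"
  unfolding code_fm_def code_rel_def mod_rel_def rem_rel_def Let_def by simp

lemma free_code_fm: "free (code_fm V j t) \<subseteq> vars_trm t \<union> {V, V+1, V+2}"
  unfolding code_fm_def Let_def by auto

lemma bound_code_fm: "bound (code_fm V j t) \<subseteq> {V..<V+9}"
  unfolding code_fm_def Let_def by auto

lemma qr_code_fm: "qr (code_fm V j t) = 4"
  unfolding code_fm_def Let_def by simp

lemma wf_code_fm: "arith_sig \<tau> \<Longrightarrow> wf_trm \<tau> t \<Longrightarrow> wf_fm \<tau> (code_fm V j t)"
  using wf_numeral_trm[of \<tau> j] unfolding code_fm_def Let_def arith_sig_def by simp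

definition elt :: "struc \<Rightarrow> nat \<Rightarrow> nat" where
  "elt A = inv_into (univ A) (pos A)"

locale arith_model =
  fixes \<tau> :: sig and A :: struc
  assumes arith_sig: "arith_sig \<tau>" and arith_struc: "arith_struc \<tau> A"
begin

lemma is_struc: "is_struc \<tau> A"
  using arith_struc unfolding arith_struc_def by auto

lemma finite_univ: "finite (univ A)"
  using is_struc unfolding is_struc_def by auto

lemma univ_not_empty: "univ A \<noteq> {}"
  using is_struc unfolding is_struc_def by auto

lemma Less_irrefl: "a \<in> univ A \<Longrightarrow> \<not> rint A Less [a, a]"
  using arith_struc unfolding arith_struc_def by auto

lemma Less_trans:
  "a \<in> univ A \<Longrightarrow> b \<in> univ A \<Longrightarrow> c \<in> univ A \<Longrightarrow> rint A Less [a, b] \<Longrightarrow> rint A Less [b, c]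
    \<Longrightarrow> rint A Less [a, c]"
  using arith_struc unfolding arith_struc_def by blast

lemma Less_total: "a \<in> univ A \<Longrightarrow> b \<in> univ A \<Longrightarrow> a = b \<or> rint A Less [a, b] \<or> rint A Less [b, a]"
  using arith_struc unfolding arith_struc_def by blast

lemma pos_less_pos:
  assumes "a \<in> univ A" "b \<in> univ A" "rint A Less [a, b]"
  shows "pos A a < pos A b"
proof -
  have "{c \<in> univ A. rint A Less [c, a]} \<subset> {c \<in> univ A. rint A Less [c, b]}"
    using Less_trans Less_irrefl assms by blast
  then show ?thesis unfolding pos_def using finite_univ by (intro psubset_card_mono) auto
qed

lemma Less_iff: "a \<in> univ A \<Longrightarrow> b \<in> univ A \<Longrightarrow> rint A Less [a, b] \<longleftrightarrow> pos A a < pos A b"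
  by (metis less_asym' pos_less_pos Less_total less_irrefl)

lemma pos_less_card: "a \<in> univ A \<Longrightarrow> pos A a < card (univ A)"
proof -
  assume a: "a \<in> univ A"
  have "{c \<in> univ A. rint A Less [c, a]} \<subseteq> univ A - {a}" using Less_irrefl a by auto
  then have "pos A a \<le> card (univ A - {a})" unfolding pos_def using finite_univ by (intro card_mono) auto
  also have "\<dots> < card (univ A)" by (rule card_Diff1_less[OF finite_univ a])
  finally show ?thesis .
qed

lemma bij_betw_pos: "bij_betw (pos A) (univ A) {..<card (univ A)}"
proof -
  have "inj_on (pos A) (univ A)"
    by (rule inj_onI) (metis pos_less_pos Less_total less_irrefl)
  moreover have "pos A ` univ A \<subseteq> {..<card (univ A)}" using pos_less_card by auto
  ultimately show ?thesis
    by (simp add: bij_betw_def card_image card_subset_eq)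
qed

lemma pos_elt: "p < card (univ A) \<Longrightarrow> elt A p \<in> univ A \<and> pos A (elt A p) = p"
  unfolding elt_def
  using bij_betw_apply[OF bij_betw_inv_into[OF bij_betw_pos]] bij_betw_inv_into_right[OF bij_betw_pos]
  by simp

lemma elt_pos: "a \<in> univ A \<Longrightarrow> elt A (pos A a) = a"
  unfolding elt_def using bij_betw_pos by (simp add: bij_betw_inv_into_left)

lemma Add_iff:
  "a \<in> univ A \<Longrightarrow> b \<in> univ A \<Longrightarrow> c \<in> univ A \<Longrightarrow> rint A Add [a, b, c] \<longleftrightarrow> pos A a + pos A b = pos A c"
  using arith_struc unfolding arith_struc_def by blast

lemma Mult_iff:
  "a \<in> univ A \<Longrightarrow> b \<in> univ A \<Longrightarrow> c \<in> univ A \<Longrightarrow> rint A Mult [a, b, c] \<longleftrightarrow> pos A a * pos A b = pos A c"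
  using arith_struc unfolding arith_struc_def by blast

lemma Succ_in_univ: "a \<in> univ A \<Longrightarrow> fint A Succ [a] \<in> univ A"
  using is_struc arith_sig unfolding is_struc_def arith_sig_def by auto

lemma Zero_in_univ: "fint A Zero [] \<in> univ A"
  using is_struc arith_sig unfolding is_struc_def arith_sig_def by auto

lemma pos_Succ: "a \<in> univ A \<Longrightarrow> pos A a + 1 < card (univ A) \<Longrightarrow> pos A (fint A Succ [a]) = pos A a + 1"
  using arith_struc unfolding arith_struc_def by blast

lemma Succ_last: "a \<in> univ A \<Longrightarrow> pos A a + 1 = card (univ A) \<Longrightarrow> fint A Succ [a] = a"
  using arith_struc unfolding arith_struc_def by blast

lemma pos_Zero: "pos A (fint A Zero []) = 0"
  using arith_struc unfolding arith_struc_def by blast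

lemma Less_Succ_iff:
  assumes "a \<in> univ A"
  shows "rint A Less [a, fint A Succ [a]] \<longleftrightarrow> pos A a + 1 < card (univ A)"
  using pos_Succ[OF assms] Succ_last[OF assms] pos_less_card[OF assms] Less_irrefl[OF assms]
    Less_iff[OF assms Succ_in_univ[OF assms]] by (cases "pos A a + 1 < card (univ A)") auto

lemma pos_numeral_val: "j < card (univ A) \<Longrightarrow> numeral_val A j \<in> univ A \<and> pos A (numeral_val A j) = j"
proof (induction j)
  case 0
  then show ?case using Zero_in_univ pos_Zero by (simp add: numeral_val_def del: eval_numeral_trm)
next
  case (Suc j)
  then have "j < card (univ A)" by simp
  then have "numeral_val A j \<in> univ A" "pos A (numeral_val A j) = j" using Suc.IH by blast+
  moreover have "numeral_val A (Suc j) = fint A Succ [numeral_val A j]"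
    by (simp add: numeral_val_def del: eval_numeral_trm)
  ultimately show ?case using Suc.prems pos_Succ Succ_in_univ by simp
qed

lemma mod_rel_iff:
  assumes "q \<in> univ A" "x \<in> univ A" "u \<in> univ A"
  shows "mod_rel A q x u \<longleftrightarrow> 0 < pos A q \<and> pos A u = pos A x mod pos A q"
proof
  assume "mod_rel A q x u"
  then obtain a b where "a \<in> univ A" "b \<in> univ A" "pos A a * pos A q = pos A b"
    "pos A b + pos A u = pos A x" "pos A u < pos A q"
    unfolding mod_rel_def using assms Mult_iff Add_iff Less_iff by meson
  then have "pos A x mod pos A q = (pos A u + pos A a * pos A q) mod pos A q" "pos A u < pos A q"
    by (simp_all add: add.commute)
  then show "0 < pos A q \<and> pos A u = pos A x mod pos A q" by simp
next
  assume u: "0 < pos A q \<and> pos A u = pos A x mod pos A q"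
  let ?a = "pos A x div pos A q"
  have "?a < card (univ A)" "?a * pos A q < card (univ A)"
    using pos_less_card[OF assms(2)] div_le_dividend div_times_less_eq_dividend le_less_trans by blast+
  then obtain a b where ab: "a \<in> univ A" "pos A a = ?a" "b \<in> univ A" "pos A b = ?a * pos A q"
    using pos_elt by blast
  have "?a * pos A q + pos A u = pos A x" using u div_mult_mod_eq by metis
  then have "rint A Mult [a, q, b]" "rint A Add [b, u, x]" using ab assms Mult_iff Add_iff by simp_all
  moreover have "rint A Less [u, q]" using u assms Less_iff by simp
  ultimately show "mod_rel A q x u" unfolding mod_rel_def using ab by blast
qed

lemma rem_rel_iff:
  assumes "w \<in> univ A" "c \<in> univ A" "R \<in> univ A"
  shows "rem_rel A w c R \<longleftrightarrow> pos A w + 1 < card (univ A) \<and> pos A R mod (pos A w + 1) = pos A c"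
proof
  assume rem: "rem_rel A w c R"
  then have w: "pos A w + 1 < card (univ A)" unfolding rem_rel_def using Less_Succ_iff[OF assms(1)] by blast
  then have Sw: "fint A Succ [w] \<in> univ A" "pos A (fint A Succ [w]) = pos A w + 1"
    using Succ_in_univ pos_Succ assms(1) by auto
  from rem obtain e f where "e \<in> univ A" "f \<in> univ A" "pos A e * (pos A w + 1) = pos A f"
    "pos A f + pos A c = pos A R" "pos A c < pos A w + 1"
    unfolding rem_rel_def using Sw assms Mult_iff Add_iff Less_iff by metis
  then have "pos A R mod (pos A w + 1) = pos A c" by (metis mod_less mod_mult_self3 add.commute)
  with w show "pos A w + 1 < card (univ A) \<and> pos A R mod (pos A w + 1) = pos A c" ..
next
  assume r: "pos A w + 1 < card (univ A) \<and> pos A R mod (pos A w + 1) = pos A c"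
  let ?e = "pos A R div (pos A w + 1)"
  have Sw: "fint A Succ [w] \<in> univ A" "pos A (fint A Succ [w]) = pos A w + 1"
    using Succ_in_univ pos_Succ assms(1) r by auto
  have "?e < card (univ A)" "?e * (pos A w + 1) < card (univ A)"
    using pos_less_card[OF assms(3)] div_le_dividend div_times_less_eq_dividend le_less_trans by blast+
  then obtain e f where ef: "e \<in> univ A" "pos A e = ?e" "f \<in> univ A" "pos A f = ?e * (pos A w + 1)"
    using pos_elt by blast
  have "?e * (pos A w + 1) + pos A c = pos A R" using r div_mult_mod_eq by metis
  then have "rint A Mult [e, fint A Succ [w], f]" "rint A Add [f, c, R]"
    using ef Sw assms Mult_iff Add_iff by simp_all
  moreover have "rint A Less [c, fint A Succ [w]]" "rint A Less [w, fint A Succ [w]]"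
    using r Sw assms Less_iff mod_less_divisor[of "pos A w + 1" "pos A R"] by auto
  ultimately show "rem_rel A w c R" unfolding rem_rel_def using ef by blast
qed

lemma code_rel_iff:
  assumes "q \<in> univ A" "L \<in> univ A" "R \<in> univ A" "x \<in> univ A" and "j < card (univ A)"
  shows "code_rel A q L R j x \<longleftrightarrow> 0 < pos A q \<and> (pos A x mod pos A q + 1) * pos A L + 1 < card (univ A)
     \<and> pos A R mod ((pos A x mod pos A q + 1) * pos A L + 1) = j"
    (is "_ \<longleftrightarrow> 0 < pos A q \<and> ?w + 1 < _ \<and> _")
proof -
  have j: "numeral_val A j \<in> univ A" "pos A (numeral_val A j) = j" using pos_numeral_val assms(5) by auto
  have Su: "fint A Succ [u] \<in> univ A \<and> pos A (fint A Succ [u]) = pos A u + 1"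
    if "u \<in> univ A" "pos A u < pos A q" for u
    using that Succ_in_univ pos_Succ pos_less_card[OF assms(1)] by auto
  show ?thesis
  proof
    assume "code_rel A q L R j x"
    then obtain u w where uw: "u \<in> univ A" "w \<in> univ A" "mod_rel A q x u"
      "rint A Mult [fint A Succ [u], L, w]" "rem_rel A w (numeral_val A j) R"
      unfolding code_rel_def by blast
    then have u: "0 < pos A q" "pos A u = pos A x mod pos A q" using mod_rel_iff assms by simp_all
    then have "fint A Succ [u] \<in> univ A \<and> pos A (fint A Succ [u]) = pos A u + 1" using Su uw(1) by simp
    then have "pos A w = ?w" using uw(2,4) u(2) Mult_iff assms(2) by simp
    with uw(2,5) j assms(3) u(1) show "0 < pos A q \<and> ?w + 1 < card (univ A) \<and> pos A R mod (?w + 1) = j"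
      using rem_rel_iff by simp
  next
    assume r: "0 < pos A q \<and> ?w + 1 < card (univ A) \<and> pos A R mod (?w + 1) = j"
    let ?u = "elt A (pos A x mod pos A q)"
    have u: "?u \<in> univ A" "pos A ?u = pos A x mod pos A q"
      using pos_elt pos_less_card[OF assms(1)] r mod_less_divisor less_trans by metis+
    have w: "elt A ?w \<in> univ A" "pos A (elt A ?w) = ?w" using pos_elt r by auto
    have "mod_rel A q x ?u" using mod_rel_iff assms u r by simp
    moreover have "rint A Mult [fint A Succ [?u], L, elt A ?w]"
      using Mult_iff Su[OF u(1)] u w assms(2) r by simp
    moreover have "rem_rel A (elt A ?w) (numeral_val A j) R" using rem_rel_iff w j assms(3) r by simp
    ultimately show "code_rel A q L R j x" unfolding code_rel_def using u(1) w(1) by blast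
  qed
qed

lemma one_le_colors: "col ` univ A \<subseteq> {1..k :: nat} \<Longrightarrow> 1 \<le> k"
proof -
  assume col: "col ` univ A \<subseteq> {1..k}"
  obtain a where "a \<in> univ A" using univ_not_empty by blast
  with col have "col a \<in> {1..k}" by blast
  then show "1 \<le> k" by simp
qed

lemma complete_small:
  assumes "card (univ A) \<le> N" and col: "col ` univ A \<subseteq> {1..k}"
  shows "\<exists>g\<in>set (color_lists k N).
    \<forall>a\<in>univ A. first_hit_color (\<lambda>j x. x = numeral_val A (j - 1)) N g a = col a"
proof -
  have "1 \<le> k" using one_le_colors[OF col] .
  moreover have c_range: "(if j \<le> card (univ A) then col (elt A (j - 1)) else 1) \<in> {1..k}"
    if "j \<in> {1..N}" for j
  proof (cases "j \<le> card (univ A)")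
    case True
    with that have "j - 1 < card (univ A)" by auto
    then have "elt A (j - 1) \<in> univ A" using pos_elt by blast
    with True col show ?thesis by auto
  qed (use \<open>1 \<le> k\<close> in simp)
  ultimately obtain g where g: "g \<in> set (color_lists k N)"
    and g_eq: "\<forall>j\<in>{1..N}. g ! j = (if j \<le> card (univ A) then col (elt A (j - 1)) else 1)"
    using ex_color_list[of k N "\<lambda>j. if j \<le> card (univ A) then col (elt A (j - 1)) else 1"] c_range
    by blast
  have "first_hit_color (\<lambda>j x. x = numeral_val A (j - 1)) N g a = col a" if a: "a \<in> univ A" for a
  proof -
    have p: "pos A a < card (univ A)" using pos_less_card[OF a] .
    have "first_hit_color (\<lambda>j x. x = numeral_val A (j - 1)) N g a = g ! Suc (pos A a)"
    proof (rule first_hit_color_least)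
      show "a = numeral_val A (Suc (pos A a) - 1)"
        using pos_numeral_val[OF p] elt_pos[OF a] pos_elt[OF p] by (metis diff_Suc_1 elt_pos)
      show "\<not> a = numeral_val A (j - 1)" if "j \<in> {1..<Suc (pos A a)}" for j
      proof
        assume "a = numeral_val A (j - 1)"
        moreover have "j - 1 < pos A a" using that by auto
        moreover from this p have "pos A (numeral_val A (j - 1)) = j - 1" using pos_numeral_val by simp
        ultimately show False by simp
      qed
    qed (use p assms(1) in auto)
    also have "\<dots> = col a" using g_eq p assms(1) elt_pos[OF a] by simp
    finally show ?thesis .
  qed
  with g show ?thesis by blast
qed

lemma ex_code_rel:
  assumes m: "1 \<le> m" and large: "large_threshold m < card (univ A)"
    and S: "finite S" "S \<subseteq> univ A" "card S \<le> m" and c: "\<forall>a\<in>S. c a \<in> {1..m}"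
  shows "\<exists>q\<in>univ A. \<exists>L\<in>univ A. \<exists>R\<in>univ A. \<forall>a\<in>S. \<forall>j\<in>{1..m}. code_rel A q L R j a \<longleftrightarrow> j = c a"
proof -
  let ?n = "card (univ A)"
  have c_range: "\<forall>p\<in>pos A ` S. c (elt A p) \<in> {1..m}"
  proof
    fix p assume "p \<in> pos A ` S"
    then obtain a where a: "a \<in> S" "p = pos A a" by blast
    then have "elt A p = a" using elt_pos S(2) by blast
    then show "c (elt A p) \<in> {1..m}" using c a(1) by simp
  qed
  have "pos A ` S \<subseteq> {..<?n}" using S(2) pos_less_card by auto
  moreover have "card (pos A ` S) \<le> m" using card_image_le[OF S(1), of "pos A"] S(3) by linarith
  ultimately obtain q L R where qLR: "0 < q" "q < ?n" "L < ?n" "R < ?n"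
    "\<forall>p\<in>pos A ` S. (p mod q + 1) * L + 1 < ?n \<and> R mod ((p mod q + 1) * L + 1) = c (elt A p)"
    using ex_code_params[OF m large finite_imageI[OF S(1)] _ _ c_range] by blast
  have elts: "elt A q \<in> univ A" "elt A L \<in> univ A" "elt A R \<in> univ A"
    "pos A (elt A q) = q" "pos A (elt A L) = L" "pos A (elt A R) = R"
    using pos_elt qLR(2-4) by auto
  have "code_rel A (elt A q) (elt A L) (elt A R) j a \<longleftrightarrow> j = c a" if "a \<in> S" "j \<in> {1..m}" for a j
  proof -
    have a: "a \<in> univ A" using S(2) that(1) by blast
    have "j < ?n" using that(2) less_large_threshold[of m] large by simp
    then have "code_rel A (elt A q) (elt A L) (elt A R) j a \<longleftrightarrow>
        (pos A a mod q + 1) * L + 1 < ?n \<and> R mod ((pos A a mod q + 1) * L + 1) = j"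
      using code_rel_iff[OF elts(1-3) a] elts(4-6) qLR(1) by simp
    also have "\<dots> \<longleftrightarrow> j = c a" using qLR(5) that(1) elt_pos[OF a] by auto
    finally show ?thesis .
  qed
  with elts show ?thesis by blast
qed

lemma complete_large:
  assumes m: "1 \<le> m" and large: "large_threshold m < card (univ A)"
    and S: "finite S" "S \<subseteq> univ A" "card S \<le> m" and col: "col ` univ A \<subseteq> {1..k}"
  shows "\<exists>g\<in>set (color_lists k m). \<exists>q\<in>univ A. \<exists>L\<in>univ A. \<exists>R\<in>univ A.
    \<forall>a\<in>S. first_hit_color (code_rel A q L R) m g a = col a"
proof -
  obtain h where h: "bij_betw h S {1..card S}" using finite_same_card_bij[OF S(1), of "{1..card S}"] by auto
  then have h_range: "h a \<in> {1..card S}" if "a \<in> S" for a using that by (auto simp: bij_betw_def)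
  then have "\<forall>a\<in>S. h a \<in> {1..m}" using S(3) by fastforce
  have "1 \<le> k" using one_le_colors[OF col] .
  moreover have c_range: "(if j \<le> card S then col (inv_into S h j) else 1) \<in> {1..k}"
    if "j \<in> {1..m}" for j
  proof (cases "j \<le> card S")
    case True
    with that have "inv_into S h j \<in> univ A"
      using S(2) bij_betw_apply[OF bij_betw_inv_into[OF h]] by auto
    with True col show ?thesis by auto
  qed (use \<open>1 \<le> k\<close> in simp)
  ultimately obtain g where g: "g \<in> set (color_lists k m)"
    and g_eq: "\<forall>j\<in>{1..m}. g ! j = (if j \<le> card S then col (inv_into S h j) else 1)"
    using ex_color_list[of k m "\<lambda>j. if j \<le> card S then col (inv_into S h j) else 1"] c_range
    by blast
  obtain q L R where qLR: "q \<in> univ A" "L \<in> univ A" "R \<in> univ A"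
    and code: "\<forall>a\<in>S. \<forall>j\<in>{1..m}. code_rel A q L R j a \<longleftrightarrow> j = h a"
    using ex_code_rel[OF m large S \<open>\<forall>a\<in>S. h a \<in> {1..m}\<close>] by blast
  have "first_hit_color (code_rel A q L R) m g a = col a" if "a \<in> S" for a
  proof -
    have "h a \<in> {1..card S}" using h_range that .
    then have "first_hit_color (code_rel A q L R) m g a = g ! h a"
      using code that S(3) by (intro first_hit_color_least) auto
    also have "\<dots> = col a"
      using g_eq h that \<open>h a \<in> {1..card S}\<close> S(3) by (auto simp: bij_betw_inv_into_left)
    finally show ?thesis .
  qed
  with g qLR show ?thesis by blast
qed

end

definition fresh_var :: "fm \<Rightarrow> nat" where
  "fresh_var \<phi> = Suc (Max (insert 0 (vars_fm \<phi>)))"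

lemma less_fresh_var: "\<forall>y\<in>vars_fm \<phi>. y < fresh_var \<phi>"
  unfolding fresh_var_def using finite_vars_fm[of \<phi>] by (auto intro!: le_imp_less_Suc Max_ge)

definition numeral_test :: "nat \<Rightarrow> trm \<Rightarrow> fm" where
  "numeral_test j t = Eq t (numeral_trm (j - 1))"

definition small_case :: "nat \<Rightarrow> nat \<Rightarrow> fm \<Rightarrow> fm" where
  "small_case k N \<phi> = Disjs (map (\<lambda>g. subst_colors (first_hit_fm numeral_test N g) \<phi>) (color_lists k N))"

definition large_case :: "nat \<Rightarrow> nat \<Rightarrow> fm \<Rightarrow> fm" where
  "large_case k m \<phi> = (let V = fresh_var \<phi> in
     Disjs (map (\<lambda>g. Ex V (Ex (V+1) (Ex (V+2) (subst_colors (first_hit_fm (code_fm V) m g) \<phi>))))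
       (color_lists k m)))"

text \<open>The first disjunct is false; it is there only so that the quantifier rank and the bound
  variables of \<phi> do not drop.\<close>

definition elim_colors :: "nat \<Rightarrow> fm \<Rightarrow> fm" where
  "elim_colors k \<phi> = Disj (Conj Fls (subst_colors (\<lambda>_ _. Fls) \<phi>))
     (Disj (small_case k (large_threshold (color_atoms \<phi> + 1)) \<phi>) (large_case k (color_atoms \<phi> + 1) \<phi>))"

lemma sat_subst_small_color:
  assumes "wf_fm (colors \<tau> k) \<phi>"
  shows "sat A s (subst_colors (first_hit_fm numeral_test N g) \<phi>)
    \<longleftrightarrow> sat (colored A (first_hit_color (\<lambda>j a. a = numeral_val A (j - 1)) N g)) s \<phi>"
proof (rule sat_subst_colors[where P = "{}" and V = "fresh_var \<phi>"])
  show "sat A s' (first_hit_fm numeral_test N g i t)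
      \<longleftrightarrow> first_hit_color (\<lambda>j a. a = numeral_val A (j - 1)) N g (eval A s' t) = i" for s' i t
    by (rule sat_first_hit_fm) (simp add: numeral_test_def)
qed (use assms less_fresh_var in auto)

lemma sat_subst_large_color:
  assumes "wf_fm (colors \<tau> k) \<phi>" and V: "V = fresh_var \<phi>"
  shows "sat A (s(V := q, V+1 := L, V+2 := R)) (subst_colors (first_hit_fm (code_fm V) m g) \<phi>)
    \<longleftrightarrow> sat (colored A (first_hit_color (code_rel A q L R) m g)) s \<phi>"
proof -
  define s' where "s' = s(V := q, V+1 := L, V+2 := R)"
  let ?col = "first_hit_color (code_rel A q L R) m g"
  have vars: "\<forall>y\<in>vars_fm \<phi>. y < V" unfolding V by (rule less_fresh_var)
  have "sat A s' (subst_colors (first_hit_fm (code_fm V) m g) \<phi>) = sat (colored A ?col) s' \<phi>"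
  proof (rule sat_subst_colors[where P = "{V, V+1, V+2}" and s0 = s' and V = V])
    fix i t s'' assume "\<forall>v\<in>{V, V+1, V+2}. s'' v = s' v" and t: "\<forall>y\<in>vars_trm t. y < V"
    then show "sat A s'' (first_hit_fm (code_fm V) m g i t) = (?col (eval A s'' t) = i)"
      unfolding s'_def by (intro sat_first_hit_fm) (simp add: sat_code_fm)
  qed (use assms(1) vars in auto)
  also have "\<dots> = sat (colored A ?col) s \<phi>"
    by (rule sat_cong) (use vars free_sub_vars in \<open>fastforce simp: s'_def\<close>)
  finally show ?thesis unfolding s'_def .
qed

lemma small_case_sound:
  assumes "wf_fm (colors \<tau> k) \<phi>" and "sat A s (small_case k N \<phi>)"
  shows "\<exists>col. col ` univ A \<subseteq> {1..k} \<and> sat (colored A col) s \<phi>"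
proof -
  obtain g where "g \<in> set (color_lists k N)" "sat A s (subst_colors (first_hit_fm numeral_test N g) \<phi>)"
    using assms(2) unfolding small_case_def sat_Disjs_map by blast
  then show ?thesis
    using sat_subst_small_color[OF assms(1)] first_hit_color_in_range by blast
qed

lemma large_case_sound:
  assumes "wf_fm (colors \<tau> k) \<phi>" and "sat A s (large_case k m \<phi>)"
  shows "\<exists>col. col ` univ A \<subseteq> {1..k} \<and> sat (colored A col) s \<phi>"
proof -
  define V where "V = fresh_var \<phi>"
  obtain g q L R where "g \<in> set (color_lists k m)"
    and "sat A (s(V := q, V+1 := L, V+2 := R)) (subst_colors (first_hit_fm (code_fm V) m g) \<phi>)"
    using assms(2) unfolding large_case_def V_def[symmetric] Let_def sat_Disjs_map sat.simps
    by blast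
  then show ?thesis
    using sat_subst_large_color[OF assms(1) V_def] first_hit_color_in_range by blast
qed

context arith_model
begin

lemma small_case_complete:
  assumes "card (univ A) \<le> N" and "wf_fm (colors \<tau> k) \<phi>" and S: "S \<subseteq> univ A"
    and col: "col ` univ A \<subseteq> {1..k}"
    and agree: "\<forall>col'. (\<forall>a\<in>S. col' a = col a) \<longrightarrow> sat (colored A col') s \<phi>"
  shows "sat A s (small_case k N \<phi>)"
proof -
  obtain g where g: "g \<in> set (color_lists k N)"
    and g_col: "\<forall>a\<in>univ A. first_hit_color (\<lambda>j x. x = numeral_val A (j - 1)) N g a = col a"
    using complete_small[OF assms(1) col] by blast
  then have "sat A s (subst_colors (first_hit_fm numeral_test N g) \<phi>)"
    using sat_subst_small_color[OF assms(2)] agree S by blast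
  with g show ?thesis unfolding small_case_def sat_Disjs_map by blast
qed

lemma large_case_complete:
  assumes "1 \<le> m" and "large_threshold m < card (univ A)" and "wf_fm (colors \<tau> k) \<phi>"
    and S: "finite S" "S \<subseteq> univ A" "card S \<le> m" and col: "col ` univ A \<subseteq> {1..k}"
    and agree: "\<forall>col'. (\<forall>a\<in>S. col' a = col a) \<longrightarrow> sat (colored A col') s \<phi>"
  shows "sat A s (large_case k m \<phi>)"
proof -
  define V where "V = fresh_var \<phi>"
  obtain g q L R where g: "g \<in> set (color_lists k m)" and qLR: "q \<in> univ A" "L \<in> univ A" "R \<in> univ A"
    and "\<forall>a\<in>S. first_hit_color (code_rel A q L R) m g a = col a"
    using complete_large[OF assms(1,2) S col] by blast
  then have "sat A (s(V := q, V+1 := L, V+2 := R)) (subst_colors (first_hit_fm (code_fm V) m g) \<phi>)"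
    using sat_subst_large_color[OF assms(3) V_def] agree by blast
  with g qLR show ?thesis
    unfolding large_case_def V_def[symmetric] Let_def sat_Disjs_map sat.simps by blast
qed

end

lemma small_color_syntax:
  "free (first_hit_fm numeral_test N g i t) \<subseteq> vars_trm t"
  "bound (first_hit_fm numeral_test N g i t) = {}"
  "qr (first_hit_fm numeral_test N g i t) = 0"
  using first_hit_fm_syntax[of numeral_test t "vars_trm t" "{}" 0 N g i] by (auto simp: numeral_test_def)

lemma large_color_syntax:
  "free (first_hit_fm (code_fm V) m g i t) \<subseteq> vars_trm t \<union> {V, V+1, V+2}"
  "bound (first_hit_fm (code_fm V) m g i t) \<subseteq> {V..<V+9}"
  "qr (first_hit_fm (code_fm V) m g i t) \<le> 4"
  using first_hit_fm_syntax[of "code_fm V" t "vars_trm t \<union> {V, V+1, V+2}" "{V..<V+9}" 4 m g i]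
    free_code_fm bound_code_fm qr_code_fm by auto

lemma wf_elim_colors:
  assumes "arith_sig \<tau>" and "wf_fm (colors \<tau> k) \<phi>"
  shows "wf_fm \<tau> (elim_colors k \<phi>)"
proof -
  have wf_subst: "wf_fm \<tau> (subst_colors F \<phi>)" if "\<forall>i t. wf_trm \<tau> t \<longrightarrow> wf_fm \<tau> (F i t)" for F
    using wf_subst_colors[OF assms(2) that] .
  show ?thesis unfolding elim_colors_def small_case_def large_case_def Let_def
    using assms(1) by (auto intro!: wf_subst wf_Disjs wf_first_hit_fm wf_code_fm
      simp: wf_Tru wf_numeral_trm numeral_test_def)
qed

lemma free_small_case:
  assumes "wf_fm (colors \<tau> k) \<phi>"
  shows "free (small_case k N \<phi>) \<subseteq> free \<phi>"
proof -
  have "free (subst_colors (first_hit_fm numeral_test N g) \<phi>) \<subseteq> free \<phi> \<union> {}"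
    for g by (rule free_subst_colors[OF assms]) (use small_color_syntax(1) in auto)
  then show ?thesis unfolding small_case_def by auto
qed

lemma free_large_case:
  assumes "wf_fm (colors \<tau> k) \<phi>"
  shows "free (large_case k m \<phi>) \<subseteq> free \<phi>"
proof -
  define V where "V = fresh_var \<phi>"
  have "{V, V+1, V+2} \<inter> bound \<phi> = {}"
    using less_fresh_var[of \<phi>] bound_sub_vars[of \<phi>] unfolding V_def by fastforce
  then have "free (subst_colors (first_hit_fm (code_fm V) m g) \<phi>) \<subseteq> free \<phi> \<union> {V, V+1, V+2}" for g
    by (rule free_subst_colors[OF assms, rotated]) (use large_color_syntax(1) in auto)
  then show ?thesis unfolding large_case_def Let_def V_def[symmetric] by auto
qed

lemma free_elim_colors:
  assumes "wf_fm (colors \<tau> k) \<phi>"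
  shows "free (elim_colors k \<phi>) \<subseteq> free \<phi>"
  using free_small_case[OF assms] free_large_case[OF assms] free_subst_colors[OF assms, of "\<lambda>_ _. Fls" "{}"]
  unfolding elim_colors_def by auto

lemma qr_small_case: "qr (small_case k N \<phi>) \<le> qr \<phi>"
  unfolding small_case_def using qr_subst_colors[of _ 0 \<phi>] small_color_syntax(3)
  by (auto intro!: qr_Disjs)

lemma qr_large_case: "qr (large_case k m \<phi>) \<le> qr \<phi> + 7"
proof -
  define V where "V = fresh_var \<phi>"
  have qr_g: "qr (subst_colors (first_hit_fm (code_fm V) m g) \<phi>) \<le> qr \<phi> + 4" for g
    by (rule qr_subst_colors) (use large_color_syntax(3) in blast)
  have "qr (Ex V (Ex (V+1) (Ex (V+2) (subst_colors (first_hit_fm (code_fm V) m g) \<phi>)))) \<le> qr \<phi> + 7"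
    for g using qr_g[of g] by simp
  then show ?thesis unfolding large_case_def Let_def V_def[symmetric]
    by (intro qr_Disjs) auto
qed

lemma qr_elim_colors: "qr \<phi> \<le> qr (elim_colors k \<phi>)" "qr (elim_colors k \<phi>) \<le> qr \<phi> + 7"
proof -
  show "qr \<phi> \<le> qr (elim_colors k \<phi>)"
    unfolding elim_colors_def using qr_le_subst_colors[of \<phi> "\<lambda>_ _. Fls"] by simp
  show "qr (elim_colors k \<phi>) \<le> qr \<phi> + 7"
    using qr_subst_colors[of "\<lambda>_ _. Fls" 0 \<phi>] qr_small_case[of k "large_threshold (color_atoms \<phi> + 1)" \<phi>]
      qr_large_case[of k "color_atoms \<phi> + 1" \<phi>]
    unfolding elim_colors_def by simp
qed

lemma bound_small_case: "bound (small_case k N \<phi>) \<subseteq> bound \<phi>"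
  unfolding small_case_def using bound_subst_colors[of _ "{}" \<phi>] small_color_syntax(2) by fastforce

lemma bound_large_case: "bound (large_case k m \<phi>) \<subseteq> bound \<phi> \<union> {fresh_var \<phi>..<fresh_var \<phi> + 9}"
proof -
  define V where "V = fresh_var \<phi>"
  have "bound (subst_colors (first_hit_fm (code_fm V) m g) \<phi>) \<subseteq> bound \<phi> \<union> {V..<V+9}" for g
    by (rule bound_subst_colors) (use large_color_syntax(2) in blast)
  then show ?thesis unfolding large_case_def Let_def V_def[symmetric] by auto
qed

lemma bound_elim_colors:
  "bound \<phi> \<subseteq> bound (elim_colors k \<phi>)"
  "bound (elim_colors k \<phi>) \<subseteq> bound \<phi> \<union> {fresh_var \<phi>..<fresh_var \<phi> + 9}"
  using bound_le_subst_colors[of \<phi> "\<lambda>_ _. Fls"] bound_subst_colors[of "\<lambda>_ _. Fls" "{}" \<phi>]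
    bound_small_case[of k _ \<phi>] bound_large_case[of k _ \<phi>]
  unfolding elim_colors_def by auto

lemma card_bound_elim_colors:
  "card (bound \<phi>) \<le> card (bound (elim_colors k \<phi>))"
  "card (bound (elim_colors k \<phi>)) \<le> card (bound \<phi>) + 9"
proof -
  show "card (bound \<phi>) \<le> card (bound (elim_colors k \<phi>))"
    using bound_elim_colors(1) finite_bound by (rule card_mono[rotated])
  have "card (bound (elim_colors k \<phi>)) \<le> card (bound \<phi> \<union> {fresh_var \<phi>..<fresh_var \<phi> + 9})"
    using bound_elim_colors(2) finite_bound by (intro card_mono) auto
  also have "\<dots> \<le> card (bound \<phi>) + 9"
    using card_Un_le[of "bound \<phi>" "{fresh_var \<phi>..<fresh_var \<phi> + 9}"] by simp
  finally show "card (bound (elim_colors k \<phi>)) \<le> card (bound \<phi>) + 9" .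
qed

lemma sentence_elim_colors: "wf_fm (colors \<tau> k) \<phi> \<Longrightarrow> sentence \<phi> \<Longrightarrow> sentence (elim_colors k \<phi>)"
  using free_elim_colors unfolding sentence_def by blast

lemma models_elim_colors:
  assumes \<tau>: "arith_sig \<tau>" and A: "arith_struc \<tau> A" and wf: "wf_fm (colors \<tau> k) \<phi>"
    and "sentence \<phi>" and "nnf \<phi>" and "no_col_under_all \<phi>"
  shows "models A (elim_colors k \<phi>) \<longleftrightarrow> (\<exists>B. coloring \<tau> k A B \<and> models B \<phi>)"
proof -
  interpret arith_model \<tau> A using \<tau> A by unfold_locales
  obtain a where "a \<in> univ A" using univ_not_empty by blast
  define s where "s = (\<lambda>_::nat. a)"
  have s: "\<forall>x. s x \<in> univ A" unfolding s_def using \<open>a \<in> univ A\<close> by simp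
  have "models A (elim_colors k \<phi>) \<longleftrightarrow> sat A s (elim_colors k \<phi>)"
    using models_iff_sat[OF sentence_elim_colors[OF wf \<open>sentence \<phi>\<close>] s] .
  also have "\<dots> \<longleftrightarrow> (\<exists>col. col ` univ A \<subseteq> {1..k} \<and> sat (colored A col) s \<phi>)"
  proof
    assume "sat A s (elim_colors k \<phi>)"
    then consider "sat A s (small_case k (large_threshold (color_atoms \<phi> + 1)) \<phi>)"
      | "sat A s (large_case k (color_atoms \<phi> + 1) \<phi>)"
      unfolding elim_colors_def by auto
    then show "\<exists>col. col ` univ A \<subseteq> {1..k} \<and> sat (colored A col) s \<phi>"
      by cases (erule small_case_sound[OF wf], erule large_case_sound[OF wf])
  next
    assume "\<exists>col. col ` univ A \<subseteq> {1..k} \<and> sat (colored A col) s \<phi>"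
    then obtain col where col: "col ` univ A \<subseteq> {1..k}" "sat (colored A col) s \<phi>" by blast
    obtain S where S: "S \<subseteq> univ A" "finite S" "card S \<le> color_atoms \<phi>"
      "\<forall>col'. (\<forall>a\<in>S. col' a = col a) \<longrightarrow> sat (colored A col') s \<phi>"
      using colored_support[OF is_struc \<open>nnf \<phi>\<close> \<open>no_col_under_all \<phi>\<close> wf s col(2)] by blast
    show "sat A s (elim_colors k \<phi>)"
    proof (cases "card (univ A) \<le> large_threshold (color_atoms \<phi> + 1)")
      case True
      then show ?thesis unfolding elim_colors_def
        using small_case_complete[OF True wf S(1) col(1) S(4)] by simp
    next
      case False
      then have "large_threshold (color_atoms \<phi> + 1) < card (univ A)" by simp
      from large_case_complete[OF _ this wf S(2,1) _ col(1) S(4)] S(3)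
      show ?thesis unfolding elim_colors_def by simp
    qed
  qed
  also have "\<dots> \<longleftrightarrow> (\<exists>B. coloring \<tau> k A B \<and> models B \<phi>)"
    using \<tau> ex_coloring_iff_colored[OF _ is_struc wf \<open>sentence \<phi>\<close> s] unfolding arith_sig_def by blast
  finally show ?thesis .
qed

theorem theorem3p1:
  shows "\<exists>c::nat. \<forall>\<tau> k \<phi>.
     arith_sig \<tau> \<and> wf_fm (colors \<tau> k) \<phi> \<and> sentence \<phi> \<and> nnf \<phi> \<and> no_col_under_all \<phi>
     \<longrightarrow> (\<exists>\<phi>'. wf_fm \<tau> \<phi>' \<and> sentence \<phi>'
           \<and> (\<forall>A. arith_struc \<tau> A \<longrightarrow>
                  (models A \<phi>' \<longleftrightarrow> (\<exists>B. coloring \<tau> k A B \<and> models B \<phi>)))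
           \<and> \<bar>int (qr \<phi>') - int (qr \<phi>)\<bar> \<le> int c
           \<and> \<bar>int (card (bound \<phi>')) - int (card (bound \<phi>))\<bar> \<le> int c)"
  apply (intro exI[of _ 9] allI impI, elim conjE)
  subgoal for \<tau> k \<phi>
    using wf_elim_colors[of \<tau> k \<phi>] sentence_elim_colors[of \<tau> k \<phi>] models_elim_colors[of \<tau> _ k \<phi>]
      qr_elim_colors[where k = k and \<phi> = \<phi>] card_bound_elim_colors[where k = k and \<phi> = \<phi>]
    by (intro exI[of _ "elim_colors k \<phi>"]) auto
  done

end
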